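(* Let $G=(A,\nu)\in\Gamma$. If there is a route $pm\in\mathcal R$ with $\nu_{pm}=0$ and $a_{pm}>0$, then $$\lim_{\tau\to0}\lim_{\delta\to0}\lim_{\epsilon\to0}\limsup_{n\to\infty}\frac1{n\tau}\sup_{y\in\mathbb Z_+^{\mathcal R},\,|y|<\epsilon n}\log\mathbb P\big[E^{(n)}_{\tau,\delta,y}(G)\big]=-\infty.$$
   Context: Star network: channels $\mathcal S=\{1,\dots,N\}$ with capacities $C_i>0$; routes are unordered pairs $ij$ of distinct channels with arrival rates $\lambda_{ij}\ge0$ and parameters $\mu_{ij}>0$; $\mathcal R=\{ij:\lambda_{ij}>0\}$. For $x\in\mathbb R_+^{\mathcal R}$, $x_i=\sum_{j:ij\in\mathcal R}x_{ij}$, $\nu_{ij}(x)=x_{ij}(C_i/x_i\wedge C_j/x_j)$ if $x_{ij}>0$ and $0$ otherwise, $\mu_{ij}(x)=\mu_{ij}\nu_{ij}(x)$, $\nu(x)=(\nu_{ij}(x))_{ij\in\mathcal R}$. $Q(t,y)$ is the Markov jump process on $\mathbb Z_+^{\mathcal R}$ started at $y$ jumping $x\to x+e_{ij}$ at rate $\lambda_{ij}$ and $x\to x-e_{ij}$ at rate $\mu_{ij}(x)$; $\mathbb P$ its law. $A(t)=(A_{ij}(t))_{ij\in\mathcal R}$, $A_{ij}(t)$ the number of arrivals on route $ij$ in $[0,t]$. $|\cdot|$ is a norm on $\mathbb R^{\mathcal R}$. No ergodicity is assumed. $V=\{\nu\in\mathbb R_+^{\mathcal R}:\sum_{j:ij\in\mathcal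 R}\nu_{ij}\le C_i\ \forall i\}$. The set of empirical generators is $\Gamma=\mathbb R_+^{\mathcal R}\times V$, elements $G=(A,\nu)$ with $A=(a_{ij})$, with distance $d(G,G')=\sum_{ij}|a_{ij}-a'_{ij}|+\sum_{ij}|\nu_{ij}-\nu'_{ij}|$ and balls $B(G,\delta)$. The empirical generator is $G_t=\big(\tfrac1tA(t),\tfrac1t\int_0^t\nu(Q(s))ds\big)$ (with $Q(s)=Q(s,y)$), and $$E^{(n)}_{\tau,\delta,y}(G)=\Big\{G_{n\tau}\in B(G,\delta),\ \sup_{t\in[0,n\tau]}|Q(t,y)|<\delta n\Big\}.$$ *)

theory Defs
  imports "HOL-Probability.Probability"
begin

(* Channels are 1..N; a route ij (unordered pair of distinct channels) is encoded as the
   ordered pair (i,j) with i < j.  lam, mu : route => real; C : channel => real.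
   Vectors indexed by routes are functions (nat*nat) => _, vanishing off the route set. *)

type_synonym route = "nat \<times> nat"

definition routes :: "nat \<Rightarrow> (route \<Rightarrow> real) \<Rightarrow> route set" where
  "routes N lam = {(i,j). 1 \<le> i \<and> i < j \<and> j \<le> N \<and> lam (i,j) > 0}"

definition supported :: "route set \<Rightarrow> (route \<Rightarrow> 'a::zero) \<Rightarrow> bool" where
  "supported R x \<longleftrightarrow> (\<forall>r. r \<notin> R \<longrightarrow> x r = 0)"

definition is_norm_on :: "route set \<Rightarrow> ((route \<Rightarrow> real) \<Rightarrow> real) \<Rightarrow> bool" where
  "is_norm_on R nrm \<longleftrightarrow>
     (\<forall>x. supported R x \<longrightarrow> nrm x \<ge> 0 \<and> (nrm x = 0 \<longleftrightarrow> x = (\<lambda>_. 0))) \<and>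
     (\<forall>x c. supported R x \<longrightarrow> nrm (\<lambda>r. c * x r) = \<bar>c\<bar> * nrm x) \<and>
     (\<forall>x y. supported R x \<longrightarrow> supported R y \<longrightarrow> nrm (\<lambda>r. x r + y r) \<le> nrm x + nrm y)"

definition load :: "route set \<Rightarrow> (route \<Rightarrow> real) \<Rightarrow> nat \<Rightarrow> real" where
  "load R x i = (\<Sum>r\<in>R. if fst r = i \<or> snd r = i then x r else 0)"

definition nuf :: "nat \<Rightarrow> (nat \<Rightarrow> real) \<Rightarrow> (route \<Rightarrow> real) \<Rightarrow> (route \<Rightarrow> real) \<Rightarrow> route \<Rightarrow> real" where
  "nuf N C lam x r =
     (if r \<in> routes N lam \<and> x r > 0
      then x r * min (C (fst r) / load (routes N lam) x (fst r)) (C (snd r) / load (routes N lam) x (snd r))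
      else 0)"

definition Vset :: "nat \<Rightarrow> (nat \<Rightarrow> real) \<Rightarrow> (route \<Rightarrow> real) \<Rightarrow> (route \<Rightarrow> real) set" where
  "Vset N C lam = {v. supported (routes N lam) v \<and> (\<forall>r. v r \<ge> 0) \<and>
      (\<forall>i\<in>{1..N}. load (routes N lam) v i \<le> C i)}"

definition Gamma_set :: "nat \<Rightarrow> (nat \<Rightarrow> real) \<Rightarrow> (route \<Rightarrow> real) \<Rightarrow> ((route \<Rightarrow> real) \<times> (route \<Rightarrow> real)) set" where
  "Gamma_set N C lam = {(a,v). supported (routes N lam) a \<and> (\<forall>r. a r \<ge> 0) \<and> v \<in> Vset N C lam}"

definition dG :: "route set \<Rightarrow> ((route \<Rightarrow> real) \<times> (route \<Rightarrow> real)) \<Rightarrow> ((route \<Rightarrow> real) \<times> (route \<Rightarrow> real)) \<Rightarrow> real" where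
  "dG R G G' = (\<Sum>r\<in>R. \<bar>fst G r - fst G' r\<bar>) + (\<Sum>r\<in>R. \<bar>snd G r - snd G' r\<bar>)"

(* ---- Construction of the Markov jump process (Gillespie / jump-chain construction) ----
   Transition types: (r, True) = arrival x -> x + e_r at rate lam r;
                     (r, False) = departure x -> x - e_r at rate mu r * nu_r(x). *)

definition trans :: "nat \<Rightarrow> (route \<Rightarrow> real) \<Rightarrow> (route \<times> bool) list" where
  "trans N lam =
     (let L = [(i,j). i \<leftarrow> [1..<Suc N], j \<leftarrow> [Suc i..<Suc N], lam (i,j) > 0]
      in map (\<lambda>r. (r, True)) L @ map (\<lambda>r. (r, False)) L)"

definition rate :: "nat \<Rightarrow> (nat \<Rightarrow> real) \<Rightarrow> (route \<Rightarrow> real) \<Rightarrow> (route \<Rightarrow> real) \<Rightarrow> (route \<Rightarrow> nat) \<Rightarrow> route \<times> bool \<Rightarrow> real" where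
  "rate N C lam mu x e = (if snd e then lam (fst e) else mu (fst e) * nuf N C lam (\<lambda>r. real (x r)) (fst e))"

definition qtot :: "nat \<Rightarrow> (nat \<Rightarrow> real) \<Rightarrow> (route \<Rightarrow> real) \<Rightarrow> (route \<Rightarrow> real) \<Rightarrow> (route \<Rightarrow> nat) \<Rightarrow> real" where
  "qtot N C lam mu x = sum_list (map (rate N C lam mu x) (trans N lam))"

(* pick_tr the transition with probability rate/qtot, using u uniform on [0,1] *)
definition pick_tr :: "nat \<Rightarrow> (nat \<Rightarrow> real) \<Rightarrow> (route \<Rightarrow> real) \<Rightarrow> (route \<Rightarrow> real) \<Rightarrow> (route \<Rightarrow> nat) \<Rightarrow> real \<Rightarrow> route \<times> bool" where
  "pick_tr N C lam mu x u =
     (case find (\<lambda>k. u * qtot N C lam mu x < sum_list (map (rate N C lam mu x) (take (Suc k) (trans N lam))))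
                [0..<length (trans N lam)] of
        Some k \<Rightarrow> trans N lam ! k
      | None \<Rightarrow> hd (trans N lam))"

definition apply_tr :: "(route \<Rightarrow> nat) \<Rightarrow> route \<times> bool \<Rightarrow> (route \<Rightarrow> nat)" where
  "apply_tr x e = (if snd e then x(fst e := x (fst e) + 1) else x(fst e := x (fst e) - 1))"

(* omega k = (E_k, U_k): E_k ~ Exp(1), U_k ~ Unif[0,1], all independent *)
primrec jchain :: "nat \<Rightarrow> (nat \<Rightarrow> real) \<Rightarrow> (route \<Rightarrow> real) \<Rightarrow> (route \<Rightarrow> real) \<Rightarrow> (route \<Rightarrow> nat)
                   \<Rightarrow> (nat \<Rightarrow> real \<times> real) \<Rightarrow> nat \<Rightarrow> (route \<Rightarrow> nat)" where
  "jchain N C lam mu y \<omega> 0 = y"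
| "jchain N C lam mu y \<omega> (Suc k) =
     apply_tr (jchain N C lam mu y \<omega> k) (pick_tr N C lam mu (jchain N C lam mu y \<omega> k) (snd (\<omega> k)))"

definition jev :: "nat \<Rightarrow> (nat \<Rightarrow> real) \<Rightarrow> (route \<Rightarrow> real) \<Rightarrow> (route \<Rightarrow> real) \<Rightarrow> (route \<Rightarrow> nat)
                   \<Rightarrow> (nat \<Rightarrow> real \<times> real) \<Rightarrow> nat \<Rightarrow> route \<times> bool" where
  "jev N C lam mu y \<omega> k = pick_tr N C lam mu (jchain N C lam mu y \<omega> k) (snd (\<omega> k))"

primrec jtime :: "nat \<Rightarrow> (nat \<Rightarrow> real) \<Rightarrow> (route \<Rightarrow> real) \<Rightarrow> (route \<Rightarrow> real) \<Rightarrow> (route \<Rightarrow> nat)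
                   \<Rightarrow> (nat \<Rightarrow> real \<times> real) \<Rightarrow> nat \<Rightarrow> real" where
  "jtime N C lam mu y \<omega> 0 = 0"
| "jtime N C lam mu y \<omega> (Suc k) =
     jtime N C lam mu y \<omega> k + fst (\<omega> k) / qtot N C lam mu (jchain N C lam mu y \<omega> k)"

definition njumps :: "nat \<Rightarrow> (nat \<Rightarrow> real) \<Rightarrow> (route \<Rightarrow> real) \<Rightarrow> (route \<Rightarrow> real) \<Rightarrow> (route \<Rightarrow> nat)
                   \<Rightarrow> (nat \<Rightarrow> real \<times> real) \<Rightarrow> real \<Rightarrow> nat" where
  "njumps N C lam mu y \<omega> t = card {k. 1 \<le> k \<and> jtime N C lam mu y \<omega> k \<le> t}"

definition Qp :: "nat \<Rightarrow> (nat \<Rightarrow> real) \<Rightarrow> (route \<Rightarrow> real) \<Rightarrow> (route \<Rightarrow> real) \<Rightarrow> (route \<Rightarrow> nat)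
                   \<Rightarrow> (nat \<Rightarrow> real \<times> real) \<Rightarrow> real \<Rightarrow> (route \<Rightarrow> nat)" where
  "Qp N C lam mu y \<omega> t = jchain N C lam mu y \<omega> (njumps N C lam mu y \<omega> t)"

definition Arr :: "nat \<Rightarrow> (nat \<Rightarrow> real) \<Rightarrow> (route \<Rightarrow> real) \<Rightarrow> (route \<Rightarrow> real) \<Rightarrow> (route \<Rightarrow> nat)
                   \<Rightarrow> (nat \<Rightarrow> real \<times> real) \<Rightarrow> real \<Rightarrow> route \<Rightarrow> nat" where
  "Arr N C lam mu y \<omega> t r = card {k. k < njumps N C lam mu y \<omega> t \<and> jev N C lam mu y \<omega> k = (r, True)}"

definition Omega :: "(nat \<Rightarrow> real \<times> real) measure" where
  "Omega = PiM UNIV (\<lambda>_. density lborel (exponential_density 1) \<Otimes>\<^sub>M uniform_measure lborel {0..1})"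

definition empgen :: "nat \<Rightarrow> (nat \<Rightarrow> real) \<Rightarrow> (route \<Rightarrow> real) \<Rightarrow> (route \<Rightarrow> real) \<Rightarrow> (route \<Rightarrow> nat)
                   \<Rightarrow> (nat \<Rightarrow> real \<times> real) \<Rightarrow> real \<Rightarrow> (route \<Rightarrow> real) \<times> (route \<Rightarrow> real)" where
  "empgen N C lam mu y \<omega> t =
     ((\<lambda>r. real (Arr N C lam mu y \<omega> t r) / t),
      (\<lambda>r. integral {0..t} (\<lambda>s. nuf N C lam (\<lambda>r'. real (Qp N C lam mu y \<omega> s r')) r) / t))"

definition Event :: "nat \<Rightarrow> (nat \<Rightarrow> real) \<Rightarrow> (route \<Rightarrow> real) \<Rightarrow> (route \<Rightarrow> real) \<Rightarrow> ((route \<Rightarrow> real) \<Rightarrow> real)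
                   \<Rightarrow> nat \<Rightarrow> real \<Rightarrow> real \<Rightarrow> (route \<Rightarrow> nat) \<Rightarrow> (route \<Rightarrow> real) \<times> (route \<Rightarrow> real)
                   \<Rightarrow> (nat \<Rightarrow> real \<times> real) set" where
  "Event N C lam mu nrm n \<tau> \<delta> y G =
     {\<omega> \<in> space Omega.
        dG (routes N lam) (empgen N C lam mu y \<omega> (real n * \<tau>)) G < \<delta> \<and>
        (SUP t\<in>{0..real n * \<tau>}. ereal (nrm (\<lambda>r. real (Qp N C lam mu y \<omega> t r)))) < ereal (\<delta> * real n)}"

definition elog :: "real \<Rightarrow> ereal" where
  "elog p = (if p \<le> 0 then -\<infinity> else ereal (ln p))"

definition rate_fun :: "nat \<Rightarrow> (nat \<Rightarrow> real) \<Rightarrow> (route \<Rightarrow> real) \<Rightarrow> (route \<Rightarrow> real) \<Rightarrow> ((route \<Rightarrow> real) \<Rightarrow> real)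
                   \<Rightarrow> (route \<Rightarrow> real) \<times> (route \<Rightarrow> real) \<Rightarrow> real \<Rightarrow> real \<Rightarrow> real \<Rightarrow> nat \<Rightarrow> ereal" where
  "rate_fun N C lam mu nrm G \<tau> \<delta> \<epsilon> n =
     ereal (1 / (real n * \<tau>)) *
     (SUP y\<in>{y. supported (routes N lam) y \<and> nrm (\<lambda>r. real (y r)) < \<epsilon> * real n}.
        elog (measure Omega (Event N C lam mu nrm n \<tau> \<delta> y G)))"

end

theory Submission
  imports Defs
begin

text \<open>On the event \<open>E\<close>, route \<open>pm\<close> sees about \<open>a\<^sub>p\<^sub>m n\<tau>\<close> arrivals while its queue,
  being bounded by a multiple of the norm of \<open>Q\<close>, stays below \<open>c\<delta>n\<close>; so at least
  \<open>K = (a\<^sub>p\<^sub>m - \<delta>) n\<tau> - c\<delta>n\<close> customers depart from \<open>pm\<close>.  Yet \<open>\<nu>\<^sub>p\<^sub>m = 0\<close> forces the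
  integrated departure rate, i.e. the compensator \<open>\<Lambda>\<close> of the departure count \<open>D\<close>, to stay
  below \<open>b \<delta>n\<tau>\<close> for a constant \<open>b\<close>.  The exponential supermartingale
  \<open>exp (\<theta> D - (e\<^sup>\<theta> - 1) \<Lambda>)\<close>, stopped when \<open>D\<close> reaches \<open>K\<close>, then bounds
  \<open>P(E) \<le> exp (- \<theta> K + (e\<^sup>\<theta> - 1) b \<delta>n\<tau>)\<close>, hence
  \<open>(1/n\<tau>) log P(E) \<le> - \<theta> a\<^sub>p\<^sub>m + O(\<delta>)\<close> uniformly in \<open>n\<close>, \<open>y\<close> and \<open>\<epsilon>\<close>, for every
  \<open>\<theta> \<ge> 0\<close>.  Letting \<open>\<delta> \<rightarrow> 0\<close> and then \<open>\<theta> \<rightarrow> \<infinity>\<close> gives \<open>-\<infinity>\<close>.\<close>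

section \<open>Norms on finitely supported vectors\<close>

lemma supportedD: "supported R x \<Longrightarrow> r \<notin> R \<Longrightarrow> x r = 0"
  unfolding supported_def by blast

lemma is_norm_onD:
  assumes "is_norm_on R nrm"
  shows "\<And>x. supported R x \<Longrightarrow> nrm x \<ge> 0"
    and "\<And>x. supported R x \<Longrightarrow> nrm x = 0 \<longleftrightarrow> x = (\<lambda>_. 0)"
    and "\<And>x c. supported R x \<Longrightarrow> nrm (\<lambda>r. c * x r) = \<bar>c\<bar> * nrm x"
    and "\<And>x y. supported R x \<Longrightarrow> supported R y \<Longrightarrow> nrm (\<lambda>r. x r + y r) \<le> nrm x + nrm y"
  using assms unfolding is_norm_on_def by blast+

lemma supported_eq_sum_unit:
  fixes x :: "route \<Rightarrow> real"
  assumes "supported R x" "finite R"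
  shows "x = (\<lambda>s. \<Sum>r\<in>R. x r * (if s = r then 1 else 0))"
proof
  fix s
  show "x s = (\<Sum>r\<in>R. x r * (if s = r then 1 else 0))"
  proof (cases "s \<in> R")
    case True
    have "(\<Sum>r\<in>R. x r * (if s = r then 1 else 0)) = (\<Sum>r\<in>R. if r = s then x s else 0)"
      by (intro sum.cong) auto
    then show ?thesis using True assms by simp
  next
    case False
    then show ?thesis using supportedD[OF assms(1)] by (auto intro!: sum.neutral)
  qed
qed

lemma norm_sum_unit_le:
  assumes nrm: "is_norm_on R nrm" and F: "finite F" "F \<subseteq> R"
  shows "nrm (\<lambda>s. \<Sum>r\<in>F. f r * (if s = r then 1 else 0))
           \<le> (\<Sum>r\<in>F. \<bar>f r\<bar> * nrm (\<lambda>s. if s = r then 1 else 0))"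
  using F
proof (induction F rule: finite_induct)
  case empty
  have "supported R (\<lambda>_. 0::real)" by (simp add: supported_def)
  then have "nrm (\<lambda>_. 0) = 0" using is_norm_onD(2)[OF nrm] by blast
  then show ?case by simp
next
  case (insert r0 F)
  let ?e = "\<lambda>r s. if s = r then 1 else (0::real)"
  have head: "supported R (\<lambda>s. f r0 * ?e r0 s)" using insert by (auto simp: supported_def)
  have tail: "supported R (\<lambda>s. \<Sum>r\<in>F. f r * ?e r s)"
    using insert by (auto simp: supported_def intro!: sum.neutral)
  have "nrm (\<lambda>s. \<Sum>r\<in>insert r0 F. f r * ?e r s) = nrm (\<lambda>s. f r0 * ?e r0 s + (\<Sum>r\<in>F. f r * ?e r s))"
    using insert by simp
  also have "\<dots> \<le> nrm (\<lambda>s. f r0 * ?e r0 s) + nrm (\<lambda>s. \<Sum>r\<in>F. f r * ?e r s)"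
    using is_norm_onD(4)[OF nrm head tail] by simp
  also have "nrm (\<lambda>s. f r0 * ?e r0 s) = \<bar>f r0\<bar> * nrm (?e r0)"
    using is_norm_onD(3)[OF nrm, of "?e r0" "f r0"] insert by (auto simp: supported_def)
  finally show ?case using insert by simp
qed

lemma norm_diff_le:
  assumes nrm: "is_norm_on R nrm" and fin: "finite R" and "supported R x" "supported R y"
  shows "\<bar>nrm x - nrm y\<bar> \<le> (\<Sum>r\<in>R. \<bar>x r - y r\<bar> * nrm (\<lambda>s. if s = r then 1 else 0))"
proof -
  let ?g = "\<lambda>x y. (\<Sum>r\<in>R. \<bar>x r - y r\<bar> * nrm (\<lambda>s. if s = r then 1 else 0))"
  have le: "nrm x \<le> nrm y + ?g x y" if x: "supported R x" and y: "supported R y" for x y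
  proof -
    have diff: "supported R (\<lambda>r. x r - y r)" using x y by (auto simp: supported_def)
    have "nrm x = nrm (\<lambda>r. y r + (x r - y r))" by simp
    also have "\<dots> \<le> nrm y + nrm (\<lambda>r. x r - y r)" using is_norm_onD(4)[OF nrm y diff] .
    also have "nrm (\<lambda>r. x r - y r) \<le> ?g x y"
      using norm_sum_unit_le[OF nrm fin order_refl, of "\<lambda>r. x r - y r"]
        supported_eq_sum_unit[OF diff fin] by simp
    finally show ?thesis by simp
  qed
  have "?g x y = ?g y x" by (intro sum.cong) auto
  then show ?thesis using le[of x y] le[of y x] assms by linarith
qed

lemma continuous_on_norm_supported:
  fixes nrm :: "(route \<Rightarrow> real) \<Rightarrow> real"
  assumes nrm: "is_norm_on R nrm" and fin: "finite R"
  shows "continuous_on {x. supported R x} nrm"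
  unfolding continuous_on_def
proof
  fix y :: "route \<Rightarrow> real" assume y: "y \<in> {x. supported R x}"
  let ?g = "\<lambda>x. (\<Sum>r\<in>R. \<bar>x r - y r\<bar> * nrm (\<lambda>s. if s = r then 1 else 0))"
  have "continuous_on UNIV ?g"
    by (intro continuous_intros continuous_on_product_coordinates)
  then have "(?g \<longlongrightarrow> ?g y) (at y within {x. supported R x})"
    by (meson UNIV_I continuous_on_def tendsto_within_subset subset_UNIV)
  then have g0: "(?g \<longlongrightarrow> 0) (at y within {x. supported R x})" by simp
  have "\<forall>\<^sub>F x in at y within {x. supported R x}. norm (nrm x - nrm y) \<le> ?g x"
    using norm_diff_le[OF nrm fin] y by (auto simp: eventually_at_filter intro!: always_eventually)
  then have "((\<lambda>x. nrm x - nrm y) \<longlongrightarrow> 0) (at y within {x. supported R x})"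
    using g0 by (rule Lim_null_comparison)
  then show "(nrm \<longlongrightarrow> nrm y) (at y within {x. supported R x})" by (simp add: LIM_zero_iff)
qed

lemma compact_supported_unit_sphere:
  assumes fin: "finite R"
  shows "compact {x::route\<Rightarrow>real. supported R x \<and> (\<forall>r. \<bar>x r\<bar> \<le> 1) \<and> (\<exists>r\<in>R. \<bar>x r\<bar> = 1)}"
proof -
  define cube where "cube = Pi\<^sub>E UNIV (\<lambda>r. if r \<in> R then {-1..1} else {0::real})"
  have "compactin (product_topology (\<lambda>_. euclidean) UNIV) cube"
    unfolding cube_def by (subst compactin_PiE) auto
  then have "compact cube" by (simp add: euclidean_product_topology)
  moreover have "closed (\<Union>r\<in>R. {x::route\<Rightarrow>real. \<bar>x r\<bar> = 1})"
  proof (intro closed_UN ballI fin)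
    fix r
    have "continuous_on UNIV (\<lambda>x::route\<Rightarrow>real. \<bar>x r\<bar>)"
      by (intro continuous_intros continuous_on_product_coordinates)
    then show "closed {x::route\<Rightarrow>real. \<bar>x r\<bar> = 1}"
      by (intro closed_Collect_eq) auto
  qed
  ultimately have "compact (cube \<inter> (\<Union>r\<in>R. {x. \<bar>x r\<bar> = 1}))"
    by (rule compact_Int_closed)
  moreover have "x \<in> cube \<longleftrightarrow> supported R x \<and> (\<forall>r. \<bar>x r\<bar> \<le> 1)" for x :: "route \<Rightarrow> real"
  proof -
    have "x r \<in> (if r \<in> R then {-1..1} else {0}) \<longleftrightarrow> (r \<notin> R \<longrightarrow> x r = 0) \<and> \<bar>x r\<bar> \<le> 1" for r
      by (auto simp: abs_le_iff)
    then show ?thesis unfolding cube_def supported_def PiE_UNIV_domain Pi_iff by blast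
  qed
  then have "cube \<inter> (\<Union>r\<in>R. {x. \<bar>x r\<bar> = 1})
      = {x. supported R x \<and> (\<forall>r. \<bar>x r\<bar> \<le> 1) \<and> (\<exists>r\<in>R. \<bar>x r\<bar> = 1)}"
    by auto
  ultimately show ?thesis by simp
qed

text \<open>The norm attains a positive minimum on the compact unit sphere of the sup norm.\<close>

lemma coordinate_le_norm:
  assumes nrm: "is_norm_on R nrm" and fin: "finite R" and r0: "r0 \<in> R"
  shows "\<exists>c>0. \<forall>x::route\<Rightarrow>real. supported R x \<longrightarrow> \<bar>x r0\<bar> \<le> c * nrm x"
proof -
  define S where "S = {x::route\<Rightarrow>real. supported R x \<and> (\<forall>r. \<bar>x r\<bar> \<le> 1) \<and> (\<exists>r\<in>R. \<bar>x r\<bar> = 1)}"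
  have "(\<lambda>s. if s = r0 then 1 else 0) \<in> S" using r0 unfolding S_def supported_def by auto
  moreover have "continuous_on S nrm"
    by (rule continuous_on_subset[OF continuous_on_norm_supported[OF nrm fin]]) (auto simp: S_def)
  ultimately obtain x0 where x0: "x0 \<in> S" "\<And>z. z \<in> S \<Longrightarrow> nrm x0 \<le> nrm z"
    using continuous_attains_inf[OF compact_supported_unit_sphere[OF fin, folded S_def]] by blast
  have "supported R x0" "x0 \<noteq> (\<lambda>_. 0)" using x0(1) unfolding S_def by auto
  then have m0: "nrm x0 > 0" using is_norm_onD(1,2)[OF nrm] by (metis order_le_less)
  have "\<bar>x r0\<bar> \<le> 1 / nrm x0 * nrm x" if x: "supported R x" for x
  proof (cases "\<forall>r\<in>R. x r = 0")
    case True
    then show ?thesis using r0 is_norm_onD(1)[OF nrm x] m0 by simp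
  next
    case False
    define M where "M = Max ((\<lambda>r. \<bar>x r\<bar>) ` R)"
    have Mge: "\<bar>x r\<bar> \<le> M" if "r \<in> R" for r using that fin unfolding M_def by auto
    have "M \<in> (\<lambda>r. \<bar>x r\<bar>) ` R" unfolding M_def using fin r0 by (intro Max_in) auto
    then obtain r1 where r1: "r1 \<in> R" "\<bar>x r1\<bar> = M" by force
    have Mpos: "M > 0" using False Mge by force
    have "\<bar>1 / M * x r\<bar> \<le> 1" for r
      using Mge[of r] Mpos supportedD[OF x, of r] by (cases "r \<in> R") (auto simp: abs_mult)
    moreover have "\<bar>1 / M * x r1\<bar> = 1" using r1 Mpos by (simp add: abs_mult)
    moreover have "supported R (\<lambda>r. 1 / M * x r)" using x by (simp add: supported_def)
    ultimately have "(\<lambda>r. 1 / M * x r) \<in> S" unfolding S_def using r1(1) by blast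
    then have "nrm x0 \<le> nrm (\<lambda>r. 1 / M * x r)" by (rule x0(2))
    also have "\<dots> = nrm x / M" using is_norm_onD(3)[OF nrm x, of "1/M"] Mpos by simp
    finally have "nrm x0 \<le> nrm x / M" .
    then have "M \<le> nrm x / nrm x0" using Mpos m0 by (simp add: field_simps)
    then show ?thesis using Mge[OF r0] by simp
  qed
  moreover have "1 / nrm x0 > 0" using m0 by simp
  ultimately show ?thesis by blast
qed

section \<open>The jump chain\<close>

lemma finite_routes: "finite (routes N lam)"
proof -
  have "routes N lam \<subseteq> {1..N} \<times> {1..N}" unfolding routes_def by auto
  then show ?thesis by (rule finite_subset) auto
qed

lemma set_trans: "set (trans N lam) = {(r, b). r \<in> routes N lam}"
  unfolding trans_def routes_def Let_def by (auto simp: image_iff)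

lemma dG_coordinate_le:
  assumes "r \<in> R" "finite R"
  shows "\<bar>fst G r - fst G' r\<bar> \<le> dG R G G'" "\<bar>snd G r - snd G' r\<bar> \<le> dG R G G'"
proof -
  have "\<bar>fst G r - fst G' r\<bar> \<le> (\<Sum>r\<in>R. \<bar>fst G r - fst G' r\<bar>)"
       "\<bar>snd G r - snd G' r\<bar> \<le> (\<Sum>r\<in>R. \<bar>snd G r - snd G' r\<bar>)"
    using assms by (auto intro: member_le_sum)
  moreover have "(\<Sum>r\<in>R. \<bar>fst G r - fst G' r\<bar>) \<ge> 0" "(\<Sum>r\<in>R. \<bar>snd G r - snd G' r\<bar>) \<ge> 0"
    by (auto intro: sum_nonneg)
  ultimately show "\<bar>fst G r - fst G' r\<bar> \<le> dG R G G'" "\<bar>snd G r - snd G' r\<bar> \<le> dG R G G'"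
    unfolding dG_def by linarith+
qed

lemma real_card_less_eq_sum: "real (card {k. k < (m::nat) \<and> P k}) = (\<Sum>k<m. if P k then 1 else 0)"
proof -
  have "{k. k < m \<and> P k} = {k \<in> {..<m}. P k}" by auto
  then show ?thesis using sum.inter_filter[OF finite_lessThan[of m], of "\<lambda>_. (1::real)" P] by simp
qed

locale star_network =
  fixes N :: nat and C :: "nat \<Rightarrow> real" and lam mu :: "route \<Rightarrow> real" and pm :: route
  assumes C_pos: "\<forall>i\<in>{1..N}. C i > 0"
    and lam_nonneg: "\<forall>r. lam r \<ge> 0"
    and mu_pos: "\<forall>r. mu r > 0"
    and pm_route: "pm \<in> routes N lam"
begin

abbreviation "R \<equiv> routes N lam"
abbreviation "tr \<equiv> trans N lam"
abbreviation "q \<equiv> qtot N C lam mu"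
abbreviation "rt \<equiv> rate N C lam mu"
abbreviation "pick \<equiv> pick_tr N C lam mu"

definition step :: "(route \<Rightarrow> nat) \<Rightarrow> real \<Rightarrow> route \<Rightarrow> nat" where
  "step x u = apply_tr x (pick x u)"

definition dep_ind :: "(route \<Rightarrow> nat) \<Rightarrow> real \<Rightarrow> real" where
  "dep_ind x u = (if pick x u = (pm, False) then 1 else 0)"

text \<open>An upper bound for the probability that the jump out of \<open>x\<close> is a departure from
  \<open>pm\<close>; the factor \<open>length tr\<close> bounds the number of positions of \<open>(pm, False)\<close> in \<open>tr\<close>
  and only costs a constant in the exponent.\<close>

definition dep_bound :: "(route \<Rightarrow> nat) \<Rightarrow> real" where
  "dep_bound x = real (length tr) * rt x (pm, False) / q x"

lemma load_ge:
  assumes "r \<in> R" "\<And>s. x s \<ge> 0" "fst r = i \<or> snd r = i"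
  shows "x r \<le> load R x i"
proof -
  have "x r = (if fst r = i \<or> snd r = i then x r else 0)" using assms(3) by simp
  also have "\<dots> \<le> load R x i"
    unfolding load_def using assms(1,2) finite_routes by (intro member_le_sum) auto
  finally show ?thesis .
qed

lemma nuf_nonneg:
  assumes x: "\<And>s. x s \<ge> 0"
  shows "nuf N C lam x r \<ge> 0"
proof (cases "r \<in> R \<and> x r > 0")
  case True
  have "load R x (fst r) > 0" "load R x (snd r) > 0"
    using load_ge[of r x] True x by force+
  moreover have "C (fst r) > 0" "C (snd r) > 0"
    using C_pos True unfolding routes_def by auto
  ultimately show ?thesis unfolding nuf_def using True by auto
qed (auto simp: nuf_def)

lemma rate_nonneg: "rt x e \<ge> 0"
proof -
  have "0 \<le> lam (fst e)" "0 \<le> mu (fst e)" using lam_nonneg mu_pos less_imp_le by blast+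
  moreover have "0 \<le> nuf N C lam (\<lambda>r. real (x r)) (fst e)" by (rule nuf_nonneg) simp
  ultimately show ?thesis unfolding rate_def by simp
qed

lemma rate_departure: "rt x (pm, False) = mu pm * nuf N C lam (\<lambda>r. real (x r)) pm"
  by (simp add: rate_def)

lemma arrival_pm_in_trans: "(pm, True) \<in> set tr"
  using pm_route by (simp add: set_trans)

lemma qtot_pos: "q x > 0"
proof -
  have "rt x (pm, True) \<le> q x"
    unfolding qtot_def using arrival_pm_in_trans rate_nonneg by (intro member_le_sum_list) auto
  moreover have "rt x (pm, True) > 0" using pm_route unfolding rate_def routes_def by auto
  ultimately show ?thesis by simp
qed

lemma dep_bound_nonneg: "dep_bound x \<ge> 0"
  unfolding dep_bound_def using rate_nonneg qtot_pos by (simp add: less_imp_le)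

lemma trans_ne: "tr \<noteq> []"
  using arrival_pm_in_trans by auto

lemma pick_in_trans: "pick x u \<in> set tr"
  unfolding pick_tr_def using trans_ne by (auto split: option.split simp: find_Some_iff)

lemma snd_hd_trans: "snd (hd tr) = True"
proof -
  obtain L where L: "tr = map (\<lambda>r. (r, True)) L @ map (\<lambda>r. (r, False)) L"
    unfolding trans_def Let_def by auto
  with trans_ne show ?thesis by (cases L) auto
qed

lemma supported_step: "supported R x \<Longrightarrow> supported R (step x u)"
  using pick_in_trans[of x u] unfolding step_def apply_tr_def supported_def
  by (auto simp: set_trans)

end

section \<open>The noise space\<close>

definition step_noise :: "(real \<times> real) measure" where
  "step_noise = density lborel (exponential_density 1) \<Otimes>\<^sub>M uniform_measure lborel {0..1::real}"

lemma prob_space_step_noise: "prob_space step_noise"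
  unfolding step_noise_def
  by (intro prob_space_pair prob_space_exponential_density prob_space_uniform_measure) auto

interpretation Seq: sequence_space step_noise
proof -
  interpret prob_space step_noise by (rule prob_space_step_noise)
  show "sequence_space step_noise"
    by unfold_locales (simp_all add: emeasure_space_1 sigma_finite_countable)
qed

lemma Omega_eq: "Omega = Seq.S"
  unfolding Omega_def step_noise_def ..

lemma prob_space_Omega: "prob_space Omega"
  unfolding Omega_eq by (rule Seq.P.prob_space_axioms)

lemma measurable_shift_Omega: "(\<lambda>\<omega> i. \<omega> (Suc i)) \<in> Omega \<rightarrow>\<^sub>M Omega"
  unfolding Omega_eq by (rule measurable_PiM_single') (auto simp: space_PiM)

lemma nn_integral_Omega_cons:
  fixes f :: "(nat \<Rightarrow> real \<times> real) \<Rightarrow> ennreal"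
  assumes f: "f \<in> borel_measurable Omega"
  shows "(\<integral>\<^sup>+\<omega>. f \<omega> \<partial>Omega) = (\<integral>\<^sup>+s. (\<integral>\<^sup>+\<omega>. f (case_nat s \<omega>) \<partial>Omega) \<partial>step_noise)"
proof -
  have cons: "(\<lambda>(s, \<omega>). case_nat s \<omega>) \<in> step_noise \<Otimes>\<^sub>M Seq.S \<rightarrow>\<^sub>M Seq.S" by measurable
  have f': "f \<in> borel_measurable Seq.S" using f unfolding Omega_eq .
  have "(\<integral>\<^sup>+\<omega>. f \<omega> \<partial>Seq.S) = (\<integral>\<^sup>+\<omega>. f \<omega> \<partial>distr (step_noise \<Otimes>\<^sub>M Seq.S) Seq.S (\<lambda>(s, \<omega>). case_nat s \<omega>))"
    unfolding Seq.PiM_iter ..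
  also have "\<dots> = (\<integral>\<^sup>+z. f (case_prod case_nat z) \<partial>(step_noise \<Otimes>\<^sub>M Seq.S))"
    using cons f' by (subst nn_integral_distr) (auto simp: case_prod_beta')
  also have "\<dots> = (\<integral>\<^sup>+s. (\<integral>\<^sup>+\<omega>. f (case_nat s \<omega>) \<partial>Seq.S) \<partial>step_noise)"
    using measurable_compose[OF cons f']
    by (subst Seq.P.nn_integral_fst[symmetric]) (auto simp: case_prod_beta')
  finally show ?thesis unfolding Omega_eq .
qed

lemma null_sets_nonpos_holding: "{\<omega> \<in> space Omega. \<exists>k. fst (\<omega> k) \<le> 0} \<in> null_sets Omega"
proof -
  let ?Ex = "density lborel (exponential_density 1)" and ?U = "uniform_measure lborel {0..1::real}"
  interpret U: prob_space ?U by (intro prob_space_uniform_measure) auto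
  have "emeasure ?Ex {..0} = 0"
    using emeasure_erlang_density[of 1 0 0] by (simp add: erlang_CDF_def)
  then have "{..0::real} \<times> (UNIV::real set) \<in> null_sets (?Ex \<Otimes>\<^sub>M ?U)"
    by (intro U.times_in_null_sets1) (auto simp: null_sets_def)
  moreover have "{s::real\<times>real. fst s \<le> 0} = {..0} \<times> UNIV" by auto
  ultimately have null: "{s::real\<times>real. fst s \<le> 0} \<in> null_sets step_noise"
    unfolding step_noise_def by simp
  have null_k: "{\<omega> \<in> space Omega. fst (\<omega> k) \<le> 0} \<in> null_sets Omega" for k
  proof -
    have "{\<omega> \<in> space Omega. fst (\<omega> k) \<le> 0} = {\<omega> \<in> space Seq.S. \<omega> k \<in> {s. fst s \<le> 0}}"
      unfolding Omega_eq by auto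
    moreover have "emeasure Seq.S {\<omega> \<in> space Seq.S. \<omega> k \<in> {s. fst s \<le> 0}} = emeasure step_noise {s. fst s \<le> 0}"
      using null by (intro Seq.emeasure_PiM_Collect_single) auto
    moreover have "{\<omega> \<in> space Seq.S. \<omega> k \<in> {s::real\<times>real. fst s \<le> 0}} \<in> sets Seq.S"
      using null by (intro sets_Collect_single) auto
    ultimately show ?thesis using null unfolding Omega_eq by (auto simp: null_sets_def)
  qed
  have "{\<omega> \<in> space Omega. \<exists>k. fst (\<omega> k) \<le> 0} = (\<Union>k. {\<omega> \<in> space Omega. fst (\<omega> k) \<le> 0})"
    by auto
  then show ?thesis using null_k by (simp add: null_sets_UN)
qed

lemma measurable_find:
  assumes "\<And>k. {u \<in> space M. P k u} \<in> sets M"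
  shows "(\<lambda>u. find (\<lambda>k. P k u) xs) \<in> M \<rightarrow>\<^sub>M count_space UNIV"
proof (induction xs)
  case (Cons a xs)
  have "(\<lambda>u. if P a u then Some a else find (\<lambda>k. P k u) xs) \<in> M \<rightarrow>\<^sub>M count_space UNIV"
    by (rule measurable_If[OF _ Cons assms]) simp
  then show ?case by simp
qed simp

lemma nn_integral_exp_exponential_density:
  fixes a :: real assumes a: "a \<ge> 0"
  shows "(\<integral>\<^sup>+E. ennreal (exp (- a * E)) \<partial>density lborel (exponential_density 1)) = ennreal (1 / (1 + a))"
proof -
  have "(\<integral>\<^sup>+E. ennreal (exp (- a * E)) \<partial>density lborel (exponential_density 1))
      = (\<integral>\<^sup>+E. ennreal (exponential_density 1 E) * ennreal (exp (- a * E)) \<partial>lborel)"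
    by (rule nn_integral_density) measurable
  also have "\<dots> = (\<integral>\<^sup>+E. ennreal (1 / (1 + a)) * ennreal (exponential_density (1 + a) E) \<partial>lborel)"
  proof (intro nn_integral_cong)
    fix E :: real
    show "ennreal (exponential_density 1 E) * ennreal (exp (- a * E)) =
          ennreal (1 / (1 + a)) * ennreal (exponential_density (1 + a) E)"
    proof (cases "E < 0")
      case False
      have "exp (- E * 1) * exp (- a * E) = exp (- E * (1 + a))"
        by (simp add: exp_add[symmetric] algebra_simps)
      then have "exponential_density 1 E * exp (- a * E) = 1 / (1 + a) * exponential_density (1 + a) E"
        using False a by (simp add: exponential_density_def)
      then show ?thesis using False a
        by (simp add: ennreal_mult[symmetric] exponential_density_def)
    qed (simp add: exponential_density_def)
  qed
  also have "\<dots> = ennreal (1 / (1 + a)) * (\<integral>\<^sup>+E. ennreal (exponential_density (1 + a) E) \<partial>lborel)"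
    by (rule nn_integral_cmult) measurable
  also have "(\<integral>\<^sup>+E. ennreal (exponential_density (1 + a) E) \<partial>lborel) = 1"
  proof -
    interpret prob_space "density lborel (exponential_density (1 + a))"
      using a by (intro prob_space_exponential_density) simp
    show ?thesis using emeasure_space_1 by (simp add: emeasure_density)
  qed
  finally show ?thesis by simp
qed

section \<open>An exponential supermartingale for the departures from \<open>pm\<close>\<close>

context star_network
begin

lemma measurable_pick: "(\<lambda>u. pick x u) \<in> borel \<rightarrow>\<^sub>M count_space UNIV"
proof -
  have "(\<lambda>u. find (\<lambda>k. u * q x < sum_list (map (rt x) (take (Suc k) tr))) [0..<length tr])
          \<in> borel \<rightarrow>\<^sub>M count_space UNIV"
    by (rule measurable_find) measurable
  then show ?thesis
    unfolding pick_tr_def by (rule measurable_compose) simp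
qed

lemma measurable_pick_Omega: "(\<lambda>\<omega>. pick x (snd (\<omega> k))) \<in> Omega \<rightarrow>\<^sub>M count_space UNIV"
proof -
  have "(\<lambda>\<omega>. snd (\<omega> k)) \<in> Omega \<rightarrow>\<^sub>M lborel"
    unfolding Omega_def by measurable
  then show ?thesis by (rule measurable_compose) (simp add: measurable_pick)
qed

lemma sets_departure_selectors: "{u. pick x u = (pm, False)} \<in> sets borel"
  using measurable_sets[OF measurable_pick, of "{(pm, False)}"] by (simp add: vimage_def)

lemma measurable_dep_ind: "dep_ind x \<in> borel_measurable borel"
proof -
  have "dep_ind x = indicator {u. pick x u = (pm, False)}"
    unfolding dep_ind_def by (auto simp: indicator_def)
  then show ?thesis using sets_departure_selectors by simp
qed

lemma departure_selectors_subset: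
  "{u. pick x u = (pm, False)} \<inter> {0..1} \<subseteq>
     (\<Union>k\<in>{k. k < length tr \<and> tr ! k = (pm, False)}.
        {sum_list (map (rt x) (take k tr)) / q x ..< sum_list (map (rt x) (take (Suc k) tr)) / q x})"
proof
  fix u assume u: "u \<in> {u. pick x u = (pm, False)} \<inter> {0..1}"
  let ?s = "\<lambda>k. sum_list (map (rt x) (take k tr))"
  let ?P = "\<lambda>k. u * q x < ?s (Suc k)"
  have qx: "q x > 0" by (rule qtot_pos)
  show "u \<in> (\<Union>k\<in>{k. k < length tr \<and> tr ! k = (pm, False)}. {?s k / q x ..< ?s (Suc k) / q x})"
  proof (cases "find ?P [0..<length tr]")
    case None
    then have "pick x u = hd tr" unfolding pick_tr_def by simp
    with u snd_hd_trans show ?thesis by simp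
  next
    case (Some k)
    then have k: "k < length tr" "?P k" "\<And>j. j < k \<Longrightarrow> \<not> ?P j"
      unfolding find_Some_iff by auto
    have "?s k \<le> u * q x"
    proof (cases k)
      case 0 then show ?thesis using u qx by simp
    next
      case (Suc j) then show ?thesis using k(3)[of j] by simp
    qed
    then have "u \<in> {?s k / q x ..< ?s (Suc k) / q x}" using k(2) qx by (simp add: field_simps)
    moreover have "tr ! k = (pm, False)" using Some u unfolding pick_tr_def by simp
    ultimately show ?thesis using k(1) by blast
  qed
qed

lemma emeasure_departure_le:
  "emeasure (uniform_measure lborel {0..1::real}) {u. pick x u = (pm, False)} \<le> ennreal (dep_bound x)"
proof -
  let ?s = "\<lambda>k. sum_list (map (rt x) (take k tr))"
  let ?K = "{k. k < length tr \<and> tr ! k = (pm, False)}"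
  have "emeasure (uniform_measure lborel {0..1::real}) {u. pick x u = (pm, False)}
        = emeasure lborel ({u. pick x u = (pm, False)} \<inter> {0..1})"
    using sets_departure_selectors
    by (subst emeasure_uniform_measure) (auto simp: Int_commute divide_ennreal_def)
  also have "\<dots> \<le> emeasure lborel (\<Union>k\<in>?K. {?s k / q x ..< ?s (Suc k) / q x})"
    by (rule emeasure_mono[OF departure_selectors_subset]) auto
  also have "\<dots> \<le> (\<Sum>k\<in>?K. emeasure lborel {?s k / q x ..< ?s (Suc k) / q x})"
    by (rule emeasure_subadditive_finite) auto
  also have "\<dots> = (\<Sum>k\<in>?K. ennreal (rt x (pm, False) / q x))"
  proof (intro sum.cong refl)
    fix k assume "k \<in> ?K"
    then have "?s (Suc k) = ?s k + rt x (pm, False)" by (simp add: take_Suc_conv_app_nth)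
    then show "emeasure lborel {?s k / q x ..< ?s (Suc k) / q x} = ennreal (rt x (pm, False) / q x)"
      using qtot_pos[of x] rate_nonneg[of x "(pm, False)"]
      by (subst emeasure_lborel_Ico) (auto simp: field_simps diff_divide_distrib)
  qed
  also have "\<dots> = ennreal (real (card ?K) * (rt x (pm, False) / q x))"
    using rate_nonneg qtot_pos
    by (simp add: ennreal_of_nat_eq_real_of_nat ennreal_mult[symmetric] less_imp_le)
  also have "\<dots> \<le> ennreal (dep_bound x)"
  proof (intro ennreal_leI)
    have "card ?K \<le> card {..<length tr}" by (intro card_mono) auto
    moreover have "rt x (pm, False) / q x \<ge> 0" using rate_nonneg qtot_pos by (simp add: less_imp_le)
    ultimately have "real (card ?K) * (rt x (pm, False) / q x) \<le> real (length tr) * (rt x (pm, False) / q x)"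
      by (intro mult_right_mono) simp_all
    then show "real (card ?K) * (rt x (pm, False) / q x) \<le> dep_bound x"
      unfolding dep_bound_def by simp
  qed
  finally show ?thesis .
qed

definition step_factor :: "real \<Rightarrow> (route \<Rightarrow> nat) \<Rightarrow> real \<times> real \<Rightarrow> real" where
  "step_factor \<theta> x s = exp (\<theta> * dep_ind x (snd s) - (exp \<theta> - 1) * dep_bound x * fst s)"

lemma measurable_step_factor [measurable]:
  "(\<lambda>\<omega>. step_factor \<theta> x (\<omega> k)) \<in> borel_measurable Omega"
proof -
  have "(\<lambda>\<omega>. dep_ind x (snd (\<omega> k))) \<in> borel_measurable Omega"
    using measurable_dep_ind unfolding Omega_def by measurable
  then show ?thesis unfolding step_factor_def Omega_def by measurable
qed

lemma nn_integral_exp_dep_ind_le: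
  assumes \<theta>: "\<theta> \<ge> 0"
  shows "(\<integral>\<^sup>+u. ennreal (exp (\<theta> * dep_ind x u)) \<partial>uniform_measure lborel {0..1})
           \<le> ennreal (1 + (exp \<theta> - 1) * dep_bound x)"
proof -
  let ?c = "exp \<theta> - 1" and ?p = "dep_bound x"
  let ?U = "uniform_measure lborel {0..1::real}" and ?D = "{u. pick x u = (pm, False)}"
  have c0: "?c \<ge> 0" using \<theta> by simp
  have p0: "?p \<ge> 0" by (rule dep_bound_nonneg)
  interpret U: prob_space ?U by (intro prob_space_uniform_measure) auto
  have D: "?D \<in> sets ?U" using sets_departure_selectors by simp
  have "ennreal (exp \<theta>) = 1 + ennreal ?c"
    using c0 ennreal_plus[of 1 ?c] by simp
  then have "ennreal (exp (\<theta> * dep_ind x u)) = 1 + ennreal ?c * indicator ?D u" for u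
    by (auto simp: dep_ind_def indicator_def)
  then have "(\<integral>\<^sup>+u. ennreal (exp (\<theta> * dep_ind x u)) \<partial>?U) = (\<integral>\<^sup>+u. 1 + ennreal ?c * indicator ?D u \<partial>?U)"
    by (intro nn_integral_cong) simp
  also have "\<dots> = (\<integral>\<^sup>+u. 1 \<partial>?U) + (\<integral>\<^sup>+u. ennreal ?c * indicator ?D u \<partial>?U)"
    using D by (intro nn_integral_add) auto
  also have "\<dots> = 1 + ennreal ?c * emeasure ?U ?D"
    using D U.emeasure_space_1 by (simp add: nn_integral_cmult_indicator)
  also have "\<dots> \<le> 1 + ennreal ?c * ennreal ?p"
    by (intro add_left_mono mult_left_mono emeasure_departure_le) auto
  also have "\<dots> = ennreal (1 + ?c * ?p)"
    using c0 p0 by (simp add: ennreal_mult ennreal_plus[symmetric])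
  finally show ?thesis .
qed

text \<open>Mean of the one-step factor: the exponential holding time contributes
  \<open>1 / (1 + (e\<^sup>\<theta> - 1) p)\<close>, the selector at most \<open>1 + (e\<^sup>\<theta> - 1) p\<close>, where \<open>p = dep_bound x\<close>.\<close>

lemma nn_integral_step_factor_le_1:
  fixes \<theta> :: real assumes \<theta>: "\<theta> \<ge> 0"
  shows "(\<integral>\<^sup>+s. ennreal (step_factor \<theta> x s) \<partial>step_noise) \<le> 1"
proof -
  let ?c = "exp \<theta> - 1" and ?p = "dep_bound x"
  let ?Ex = "density lborel (exponential_density 1)" and ?U = "uniform_measure lborel {0..1::real}"
  have c0: "?c \<ge> 0" using \<theta> by simp
  have p0: "?p \<ge> 0" by (rule dep_bound_nonneg)
  interpret U: prob_space ?U by (intro prob_space_uniform_measure) auto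
  have mdep: "dep_ind x \<in> borel_measurable ?U"
    using measurable_dep_ind measurable_cong_sets[of ?U borel borel borel] by simp
  have factor: "ennreal (step_factor \<theta> x (E, u))
      = ennreal (exp (- (?c * ?p) * E)) * ennreal (exp (\<theta> * dep_ind x u))" for u E
  proof -
    have "step_factor \<theta> x (E, u) = exp (- (?c * ?p) * E) * exp (\<theta> * dep_ind x u)"
      unfolding step_factor_def by (simp add: exp_add[symmetric] algebra_simps)
    then show ?thesis by (simp add: ennreal_mult)
  qed
  have meas: "(\<lambda>s. ennreal (step_factor \<theta> x s)) \<in> borel_measurable (?Ex \<Otimes>\<^sub>M ?U)"
  proof -
    have "(\<lambda>s. dep_ind x (snd s)) \<in> borel_measurable (?Ex \<Otimes>\<^sub>M ?U)"
      using mdep by (rule measurable_compose[OF measurable_snd])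
    then show ?thesis unfolding step_factor_def by measurable
  qed
  have "(\<integral>\<^sup>+s. ennreal (step_factor \<theta> x s) \<partial>step_noise)
       = (\<integral>\<^sup>+E. (\<integral>\<^sup>+u. ennreal (step_factor \<theta> x (E, u)) \<partial>?U) \<partial>?Ex)"
    unfolding step_noise_def using U.nn_integral_fst[OF meas, symmetric] by simp
  also have "\<dots> = (\<integral>\<^sup>+E. ennreal (exp (- (?c * ?p) * E)) * (\<integral>\<^sup>+u. ennreal (exp (\<theta> * dep_ind x u)) \<partial>?U) \<partial>?Ex)"
  proof (intro nn_integral_cong)
    fix E
    show "(\<integral>\<^sup>+u. ennreal (step_factor \<theta> x (E, u)) \<partial>?U)
        = ennreal (exp (- (?c * ?p) * E)) * (\<integral>\<^sup>+u. ennreal (exp (\<theta> * dep_ind x u)) \<partial>?U)"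
      unfolding factor using measurable_dep_ind by (intro nn_integral_cmult) measurable
  qed
  also have "\<dots> = (\<integral>\<^sup>+E. ennreal (exp (- (?c * ?p) * E)) \<partial>?Ex) * (\<integral>\<^sup>+u. ennreal (exp (\<theta> * dep_ind x u)) \<partial>?U)"
    by (rule nn_integral_multc) measurable
  also have "(\<integral>\<^sup>+E. ennreal (exp (- (?c * ?p) * E)) \<partial>?Ex) = ennreal (1 / (1 + ?c * ?p))"
    using c0 p0 by (intro nn_integral_exp_exponential_density) simp
  also have "(\<integral>\<^sup>+u. ennreal (exp (\<theta> * dep_ind x u)) \<partial>?U) \<le> ennreal (1 + ?c * ?p)"
    by (rule nn_integral_exp_dep_ind_le[OF \<theta>])
  finally have "(\<integral>\<^sup>+s. ennreal (step_factor \<theta> x s) \<partial>step_noise)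
      \<le> ennreal (1 / (1 + ?c * ?p)) * ennreal (1 + ?c * ?p)"
    by (simp add: mult_left_mono)
  also have "\<dots> = 1"
  proof -
    have "1 + ?c * ?p > 0" using c0 p0 by (simp add: add_pos_nonneg)
    then show ?thesis by (simp add: ennreal_mult[symmetric])
  qed
  finally show ?thesis .
qed


text \<open>The exponential supermartingale \<open>exp (\<theta> D\<^sub>m - (e\<^sup>\<theta> - 1) \<Lambda>\<^sub>m)\<close> of the number \<open>D\<^sub>m\<close> of
  departures from \<open>pm\<close> among the first \<open>m\<close> jumps, with compensator \<open>\<Lambda>\<^sub>m\<close> built from
  \<open>dep_bound\<close>, frozen once the remaining target \<open>K\<close> is used up.  It is defined by recursion
  on the first noise variable, so that its mean can be bounded one step at a time.\<close>

primrec supermart :: "real \<Rightarrow> (route \<Rightarrow> nat) \<Rightarrow> real \<Rightarrow> nat \<Rightarrow> (nat \<Rightarrow> real \<times> real) \<Rightarrow> real" where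
  "supermart \<theta> y K 0 \<omega> = 1"
| "supermart \<theta> y K (Suc m) \<omega> =
     (if K > 0 then step_factor \<theta> y (\<omega> 0) *
        supermart \<theta> (step y (snd (\<omega> 0))) (K - dep_ind y (snd (\<omega> 0))) m (\<lambda>i. \<omega> (Suc i))
      else 1)"

primrec departures :: "(route \<Rightarrow> nat) \<Rightarrow> nat \<Rightarrow> (nat \<Rightarrow> real \<times> real) \<Rightarrow> real" where
  "departures y 0 \<omega> = 0"
| "departures y (Suc m) \<omega> =
     dep_ind y (snd (\<omega> 0)) + departures (step y (snd (\<omega> 0))) m (\<lambda>i. \<omega> (Suc i))"

primrec compensator :: "(route \<Rightarrow> nat) \<Rightarrow> nat \<Rightarrow> (nat \<Rightarrow> real \<times> real) \<Rightarrow> real" where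
  "compensator y 0 \<omega> = 0"
| "compensator y (Suc m) \<omega> =
     dep_bound y * fst (\<omega> 0) + compensator (step y (snd (\<omega> 0))) m (\<lambda>i. \<omega> (Suc i))"

lemma supermart_nonneg: "supermart \<theta> y K m \<omega> \<ge> 0"
  by (induction m arbitrary: y K \<omega>) (auto simp: step_factor_def)

lemma measurable_supermart [measurable]: "supermart \<theta> y K m \<in> borel_measurable Omega"
proof (induction m arbitrary: y K)
  case 0
  have "supermart \<theta> y K 0 = (\<lambda>_. 1)" by (simp add: fun_eq_iff)
  then show ?case by simp
next
  case (Suc m)
  define H where "H e \<omega> = (if K > 0 then step_factor \<theta> y (\<omega> 0) *
      supermart \<theta> (apply_tr y e) (K - (if e = (pm, False) then 1 else 0)) m (\<lambda>i. \<omega> (Suc i)) else 1)"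
    for e \<omega>
  have eq: "supermart \<theta> y K (Suc m) = (\<lambda>\<omega>. H (pick y (snd (\<omega> 0))) \<omega>)"
    by (simp add: fun_eq_iff H_def dep_ind_def step_def)
  have "H e \<in> borel_measurable Omega" for e
    unfolding H_def using measurable_compose[OF measurable_shift_Omega Suc.IH] by measurable
  then show ?case
    unfolding eq by (rule measurable_compose_countable[OF _ measurable_pick_Omega])
qed

lemma measurable_departures [measurable]: "departures y m \<in> borel_measurable Omega"
proof (induction m arbitrary: y)
  case 0
  have "departures y 0 = (\<lambda>_. 0)" by (simp add: fun_eq_iff)
  then show ?case by simp
next
  case (Suc m)
  define H where "H e \<omega> = (if e = (pm, False) then 1 else 0) + departures (apply_tr y e) m (\<lambda>i. \<omega> (Suc i))"
    for e \<omega>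
  have eq: "departures y (Suc m) = (\<lambda>\<omega>. H (pick y (snd (\<omega> 0))) \<omega>)"
    by (simp add: fun_eq_iff H_def dep_ind_def step_def)
  have "H e \<in> borel_measurable Omega" for e
    unfolding H_def using measurable_compose[OF measurable_shift_Omega Suc.IH] by measurable
  then show ?case
    unfolding eq by (rule measurable_compose_countable[OF _ measurable_pick_Omega])
qed

lemma nn_integral_supermart_le_1:
  assumes \<theta>: "\<theta> \<ge> 0"
  shows "(\<integral>\<^sup>+\<omega>. ennreal (supermart \<theta> y K m \<omega>) \<partial>Omega) \<le> 1"
proof (induction m arbitrary: y K)
  case 0
  interpret prob_space Omega by (rule prob_space_Omega)
  show ?case using emeasure_space_1 by simp
next
  case (Suc m)
  interpret prob_space Omega by (rule prob_space_Omega)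
  let ?W = "\<lambda>s. supermart \<theta> (step y (snd s)) (K - dep_ind y (snd s)) m"
  show ?case
  proof (cases "K > 0")
    case True
    have "(\<integral>\<^sup>+\<omega>. ennreal (supermart \<theta> y K (Suc m) \<omega>) \<partial>Omega)
        = (\<integral>\<^sup>+s. (\<integral>\<^sup>+\<omega>. ennreal (supermart \<theta> y K (Suc m) (case_nat s \<omega>)) \<partial>Omega) \<partial>step_noise)"
      by (rule nn_integral_Omega_cons) measurable
    also have "\<dots> = (\<integral>\<^sup>+s. ennreal (step_factor \<theta> y s) * (\<integral>\<^sup>+\<omega>. ennreal (?W s \<omega>) \<partial>Omega) \<partial>step_noise)"
    proof (intro nn_integral_cong)
      fix s :: "real \<times> real"
      have "(\<integral>\<^sup>+\<omega>. ennreal (supermart \<theta> y K (Suc m) (case_nat s \<omega>)) \<partial>Omega)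
          = (\<integral>\<^sup>+\<omega>. ennreal (step_factor \<theta> y s) * ennreal (?W s \<omega>) \<partial>Omega)"
        using True by (intro nn_integral_cong) (simp add: ennreal_mult supermart_nonneg step_factor_def)
      also have "\<dots> = ennreal (step_factor \<theta> y s) * (\<integral>\<^sup>+\<omega>. ennreal (?W s \<omega>) \<partial>Omega)"
        by (intro nn_integral_cmult) measurable
      finally show "(\<integral>\<^sup>+\<omega>. ennreal (supermart \<theta> y K (Suc m) (case_nat s \<omega>)) \<partial>Omega)
          = ennreal (step_factor \<theta> y s) * (\<integral>\<^sup>+\<omega>. ennreal (?W s \<omega>) \<partial>Omega)" .
    qed
    also have "\<dots> \<le> (\<integral>\<^sup>+s. ennreal (step_factor \<theta> y s) \<partial>step_noise)"
    proof (intro nn_integral_mono)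
      fix s
      show "ennreal (step_factor \<theta> y s) * (\<integral>\<^sup>+\<omega>. ennreal (?W s \<omega>) \<partial>Omega) \<le> ennreal (step_factor \<theta> y s)"
        using mult_left_mono[OF Suc.IH, of "ennreal (step_factor \<theta> y s)"] by simp
    qed
    also have "\<dots> \<le> 1" by (rule nn_integral_step_factor_le_1[OF \<theta>])
    finally show ?thesis .
  qed (use emeasure_space_1 in simp)
qed

lemma departures_le_Suc: "departures y m \<omega> \<le> departures y (Suc m) \<omega>"
proof (induction m arbitrary: y \<omega>)
  case (Suc m)
  show ?case using Suc.IH[of "step y (snd (\<omega> 0))" "\<lambda>i. \<omega> (Suc i)"] by simp
qed (simp add: dep_ind_def)

lemma compensator_nonneg: "(\<And>k. fst (\<omega> k) \<ge> 0) \<Longrightarrow> compensator y m \<omega> \<ge> 0"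
proof (induction m arbitrary: y \<omega>)
  case (Suc m)
  have "compensator (step y (snd (\<omega> 0))) m (\<lambda>i. \<omega> (Suc i)) \<ge> 0" using Suc by auto
  moreover have "dep_bound y * fst (\<omega> 0) \<ge> 0" using Suc.prems dep_bound_nonneg by simp
  ultimately show ?case by simp
qed simp

lemma supermart_Suc_stopped:
  "K \<le> departures y m \<omega> \<Longrightarrow> supermart \<theta> y K (Suc m) \<omega> = supermart \<theta> y K m \<omega>"
proof (induction m arbitrary: y K \<omega>)
  case (Suc m)
  show ?case
  proof (cases "K > 0")
    case True
    have "K - dep_ind y (snd (\<omega> 0)) \<le> departures (step y (snd (\<omega> 0))) m (\<lambda>i. \<omega> (Suc i))"
      using Suc.prems by simp
    from Suc.IH[OF this] True show ?thesis by simp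
  qed simp
qed simp

lemma supermart_ge:
  assumes \<theta>: "\<theta> \<ge> 0" and E: "\<And>k. fst (\<omega> k) \<ge> 0" and K: "K \<le> departures y m \<omega>"
  shows "exp (\<theta> * K - (exp \<theta> - 1) * compensator y m \<omega>) \<le> supermart \<theta> y K m \<omega>"
  using E K
proof (induction m arbitrary: y K \<omega>)
  case 0
  then show ?case using \<theta> by (simp add: mult_nonneg_nonpos)
next
  case (Suc m)
  show ?case
  proof (cases "K > 0")
    case False
    have "compensator y (Suc m) \<omega> \<ge> 0" by (rule compensator_nonneg) (use Suc.prems in auto)
    then have "(exp \<theta> - 1) * compensator y (Suc m) \<omega> \<ge> 0" using \<theta> by simp
    moreover have "\<theta> * K \<le> 0" using False \<theta> by (simp add: mult_nonneg_nonpos)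
    ultimately show ?thesis using False by simp
  next
    case True
    let ?d = "dep_ind y (snd (\<omega> 0))" and ?y' = "step y (snd (\<omega> 0))" and ?\<omega>' = "\<lambda>i. \<omega> (Suc i)"
    have "exp (\<theta> * (K - ?d) - (exp \<theta> - 1) * compensator ?y' m ?\<omega>') \<le> supermart \<theta> ?y' (K - ?d) m ?\<omega>'"
      using Suc by simp
    then have "step_factor \<theta> y (\<omega> 0) * exp (\<theta> * (K - ?d) - (exp \<theta> - 1) * compensator ?y' m ?\<omega>')
        \<le> step_factor \<theta> y (\<omega> 0) * supermart \<theta> ?y' (K - ?d) m ?\<omega>'"
      by (intro mult_left_mono) (auto simp: step_factor_def)
    moreover have "exp (\<theta> * K - (exp \<theta> - 1) * compensator y (Suc m) \<omega>)
        = step_factor \<theta> y (\<omega> 0) * exp (\<theta> * (K - ?d) - (exp \<theta> - 1) * compensator ?y' m ?\<omega>')"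
      by (simp add: step_factor_def exp_add[symmetric] algebra_simps)
    ultimately show ?thesis using True by simp
  qed
qed

lemma emeasure_supermart_ge:
  assumes \<theta>: "\<theta> \<ge> 0" and L: "L > 0"
  shows "emeasure Omega {\<omega> \<in> space Omega. L \<le> supermart \<theta> y K m \<omega>} \<le> ennreal (1 / L)"
proof -
  have "{\<omega> \<in> space Omega. L \<le> supermart \<theta> y K m \<omega>}
      = {\<omega> \<in> space Omega. 1 \<le> ennreal (1 / L) * ennreal (supermart \<theta> y K m \<omega>)}"
  proof (intro Collect_cong conj_cong refl)
    fix \<omega>
    have "ennreal (1 / L) * ennreal (supermart \<theta> y K m \<omega>) = ennreal (supermart \<theta> y K m \<omega> / L)"
      using L supermart_nonneg by (simp add: ennreal_mult[symmetric])
    then show "L \<le> supermart \<theta> y K m \<omega> \<longleftrightarrow> 1 \<le> ennreal (1 / L) * ennreal (supermart \<theta> y K m \<omega>)"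
      using L by (simp add: ennreal_1[symmetric] del: ennreal_1) (simp add: field_simps)
  qed
  also have "emeasure Omega \<dots> \<le> ennreal (1 / L) * (\<integral>\<^sup>+\<omega>\<in>space Omega. ennreal (supermart \<theta> y K m \<omega>) \<partial>Omega)"
    by (intro nn_integral_Markov_inequality) measurable
  also have "(\<integral>\<^sup>+\<omega>\<in>space Omega. ennreal (supermart \<theta> y K m \<omega>) \<partial>Omega)
      = (\<integral>\<^sup>+\<omega>. ennreal (supermart \<theta> y K m \<omega>) \<partial>Omega)"
    by (intro nn_integral_cong) (simp add: indicator_def)
  also have "ennreal (1 / L) * \<dots> \<le> ennreal (1 / L) * 1"
    by (intro mult_left_mono nn_integral_supermart_le_1 \<theta>) simp
  finally show ?thesis by simp
qed

text \<open>Maximal inequality for the frozen supermartingale: the events are increasing in \<open>m\<close>.\<close>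

lemma emeasure_target_reached_le:
  assumes \<theta>: "\<theta> \<ge> 0" and L: "L > 0"
  shows "emeasure Omega (\<Union>m. {\<omega> \<in> space Omega. K \<le> departures y m \<omega> \<and> L \<le> supermart \<theta> y K m \<omega>})
           \<le> ennreal (1 / L)"
proof -
  let ?A = "\<lambda>m. {\<omega> \<in> space Omega. K \<le> departures y m \<omega> \<and> L \<le> supermart \<theta> y K m \<omega>}"
  have "?A m \<in> sets Omega" for m by measurable
  then have "range ?A \<subseteq> sets Omega" by blast
  moreover have "incseq ?A"
  proof (rule incseq_SucI)
    fix m
    show "?A m \<subseteq> ?A (Suc m)"
    proof
      fix \<omega> assume \<omega>: "\<omega> \<in> ?A m"
      then have "K \<le> departures y (Suc m) \<omega>" using departures_le_Suc[of y m \<omega>] by auto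
      moreover have "supermart \<theta> y K (Suc m) \<omega> = supermart \<theta> y K m \<omega>"
        using \<omega> supermart_Suc_stopped by auto
      ultimately show "\<omega> \<in> ?A (Suc m)" using \<omega> by auto
    qed
  qed
  ultimately have "emeasure Omega (\<Union>(range ?A)) = (SUP m. emeasure Omega (?A m))"
    by (rule SUP_emeasure_incseq[symmetric])
  also have "\<dots> \<le> ennreal (1 / L)"
  proof (rule SUP_least)
    fix m
    have "emeasure Omega (?A m) \<le> emeasure Omega {\<omega> \<in> space Omega. L \<le> supermart \<theta> y K m \<omega>}"
      by (intro emeasure_mono) (auto, measurable)
    also have "\<dots> \<le> ennreal (1 / L)" by (rule emeasure_supermart_ge[OF \<theta> L])
    finally show "emeasure Omega (?A m) \<le> ennreal (1 / L)" .
  qed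
  finally show ?thesis by simp
qed


section \<open>Sample paths\<close>

abbreviation "chain y \<omega> k \<equiv> jchain N C lam mu y \<omega> k"
abbreviation "jump_time y \<omega> k \<equiv> jtime N C lam mu y \<omega> k"
abbreviation "jump y \<omega> k \<equiv> jev N C lam mu y \<omega> k"
abbreviation "nu_pm x \<equiv> nuf N C lam (\<lambda>r. real (x r)) pm"

lemma chain_Suc_shift: "chain y \<omega> (Suc k) = chain (step y (snd (\<omega> 0))) (\<lambda>i. \<omega> (Suc i)) k"
  by (induction k) (simp_all add: step_def)

lemma supported_chain: "supported R y \<Longrightarrow> supported R (chain y \<omega> k)"
  by (induction k) (simp_all add: supported_step[unfolded step_def])

lemma departures_eq_card: "departures y m \<omega> = real (card {k. k < m \<and> jump y \<omega> k = (pm, False)})"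
proof (induction m arbitrary: y \<omega>)
  case (Suc m)
  have "departures y (Suc m) \<omega> = (\<Sum>k<Suc m. dep_ind (chain y \<omega> k) (snd (\<omega> k)))"
  proof (induction m arbitrary: y \<omega>)
    case (Suc m)
    then show ?case
      unfolding sum.lessThan_Suc_shift by (simp add: chain_Suc_shift del: jchain.simps(2) sum.lessThan_Suc)
  qed simp
  then show ?case unfolding real_card_less_eq_sum by (simp add: dep_ind_def jev_def)
qed simp

lemma compensator_eq_sum: "compensator y m \<omega> = (\<Sum>k<m. dep_bound (chain y \<omega> k) * fst (\<omega> k))"
proof (induction m arbitrary: y \<omega>)
  case (Suc m)
  then show ?case
    unfolding sum.lessThan_Suc_shift by (simp add: chain_Suc_shift del: jchain.simps(2) sum.lessThan_Suc)
qed simp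

lemma chain_pm_ge:
  "real (chain y \<omega> m pm) \<ge> real (y pm) + real (card {k. k < m \<and> jump y \<omega> k = (pm, True)})
                                         - real (card {k. k < m \<and> jump y \<omega> k = (pm, False)})"
proof (induction m)
  case (Suc m)
  let ?e = "jump y \<omega> m"
  have "chain y \<omega> (Suc m) = apply_tr (chain y \<omega> m) ?e" by (simp add: jev_def)
  then have "real (chain y \<omega> (Suc m) pm)
      \<ge> real (chain y \<omega> m pm) + (if ?e = (pm, True) then 1 else 0) - (if ?e = (pm, False) then 1 else 0)"
    by (cases ?e) (auto simp: apply_tr_def of_nat_diff)
  then show ?case using Suc.IH unfolding real_card_less_eq_sum by simp
qed simp

context
  fixes y :: "route \<Rightarrow> nat" and \<omega> :: "nat \<Rightarrow> real \<times> real"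
  assumes holding_pos: "\<forall>k. fst (\<omega> k) > 0"
begin

lemma strict_mono_jump_time: "strict_mono (jump_time y \<omega>)"
proof (rule strict_monoI_Suc)
  fix k
  have "fst (\<omega> k) / q (chain y \<omega> k) > 0" using holding_pos qtot_pos by simp
  then show "jump_time y \<omega> k < jump_time y \<omega> (Suc k)" by simp
qed

lemma jump_time_mono: "i \<le> j \<Longrightarrow> jump_time y \<omega> i \<le> jump_time y \<omega> j"
  using strict_mono_less_eq[OF strict_mono_jump_time] by blast

lemma jump_time_nonneg: "jump_time y \<omega> k \<ge> 0"
  using jump_time_mono[of 0 k] by simp

lemma njumps_eq:
  assumes "jump_time y \<omega> k \<le> s" "s < jump_time y \<omega> (Suc k)"
  shows "njumps N C lam mu y \<omega> s = k"
proof -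
  have "j \<le> k" if "jump_time y \<omega> j \<le> s" for j
    using jump_time_mono[of "Suc k" j] that assms by (cases "j \<le> k") auto
  then have "{j. 1 \<le> j \<and> jump_time y \<omega> j \<le> s} = {1..k}"
    using jump_time_mono[of _ k] assms by fastforce
  then show ?thesis unfolding njumps_def by simp
qed

lemma Qp_eq:
  assumes "jump_time y \<omega> k \<le> s" "s < jump_time y \<omega> (Suc k)"
  shows "Qp N C lam mu y \<omega> s = chain y \<omega> k"
  unfolding Qp_def using njumps_eq[OF assms] by simp

lemma exists_jump_time_bracket:
  assumes "T \<ge> 0" "jump_time y \<omega> k > T"
  shows "\<exists>M. jump_time y \<omega> M \<le> T \<and> T < jump_time y \<omega> (Suc M)"
proof -
  define k0 where "k0 = (LEAST k. T < jump_time y \<omega> k)"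
  have k0: "T < jump_time y \<omega> k0" unfolding k0_def using assms(2) by (rule LeastI)
  then have "k0 \<noteq> 0" using assms(1) by (intro notI) simp
  then obtain M where M: "k0 = Suc M" using not0_implies_Suc by blast
  have "\<not> T < jump_time y \<omega> M" using Least_le[of _ M] M unfolding k0_def by fastforce
  then show ?thesis using k0 M by (intro exI[of _ M]) simp
qed

lemma has_integral_nu_pm_jump_times:
  "((\<lambda>s. nu_pm (Qp N C lam mu y \<omega> s)) has_integral
      (\<Sum>j<k. nu_pm (chain y \<omega> j) * (jump_time y \<omega> (Suc j) - jump_time y \<omega> j))) {0..jump_time y \<omega> k}"
proof (induction k)
  case 0
  show ?case using has_integral_refl(2)[of _ "0::real"] by simp
next
  case (Suc k)
  let ?f = "\<lambda>s. nu_pm (Qp N C lam mu y \<omega> s)"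
  let ?a = "jump_time y \<omega> k" and ?b = "jump_time y \<omega> (Suc k)"
  have ab: "?a \<le> ?b" by (rule jump_time_mono) simp
  have "((\<lambda>s. nu_pm (chain y \<omega> k)) has_integral nu_pm (chain y \<omega> k) * (?b - ?a)) {?a..?b}"
    using has_integral_const_real[of "nu_pm (chain y \<omega> k)" ?a ?b] ab by (simp add: mult.commute)
  then have "(?f has_integral nu_pm (chain y \<omega> k) * (?b - ?a)) {?a..?b}"
    by (rule has_integral_spike_finite[where S = "{?b}", rotated 2]) (auto simp: Qp_eq)
  then show ?case
    using has_integral_combine[OF jump_time_nonneg ab Suc.IH] by simp
qed

lemma integral_nu_pm_ge:
  assumes M: "jump_time y \<omega> M \<le> T" "T < jump_time y \<omega> (Suc M)"
  shows "(\<Sum>j<M. nu_pm (chain y \<omega> j) * (jump_time y \<omega> (Suc j) - jump_time y \<omega> j))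
           \<le> integral {0..T} (\<lambda>s. nu_pm (Qp N C lam mu y \<omega> s))"
proof -
  let ?f = "\<lambda>s. nu_pm (Qp N C lam mu y \<omega> s)"
  let ?S = "\<Sum>j<M. nu_pm (chain y \<omega> j) * (jump_time y \<omega> (Suc j) - jump_time y \<omega> j)"
  let ?a = "jump_time y \<omega> M"
  have "((\<lambda>s. nu_pm (chain y \<omega> M)) has_integral nu_pm (chain y \<omega> M) * (T - ?a)) {?a..T}"
    using has_integral_const_real[of "nu_pm (chain y \<omega> M)" ?a T] M by (simp add: mult.commute)
  then have "(?f has_integral nu_pm (chain y \<omega> M) * (T - ?a)) {?a..T}"
    by (rule has_integral_eq[rotated]) (use M in \<open>auto simp: Qp_eq\<close>)
  then have "(?f has_integral ?S + nu_pm (chain y \<omega> M) * (T - ?a)) {0..T}"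
    by (intro has_integral_combine[OF jump_time_nonneg M(1) has_integral_nu_pm_jump_times])
  then have "integral {0..T} ?f = ?S + nu_pm (chain y \<omega> M) * (T - ?a)" by (rule integral_unique)
  moreover have "nu_pm (chain y \<omega> M) * (T - ?a) \<ge> 0"
    using M nuf_nonneg[of "\<lambda>r. real (chain y \<omega> M r)" pm] by simp
  ultimately show ?thesis by simp
qed

lemma departures_ge_arrivals_minus_queue:
  assumes M: "jump_time y \<omega> M \<le> T" "T < jump_time y \<omega> (Suc M)"
  shows "departures y M \<omega> \<ge> real (Arr N C lam mu y \<omega> T pm) - real (Qp N C lam mu y \<omega> T pm)"
  using chain_pm_ge[where y=y and \<omega>=\<omega> and m=M] of_nat_0_le_iff[of "y pm"]
  unfolding departures_eq_card Arr_def njumps_eq[OF M] Qp_eq[OF M] by linarith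

text \<open>The holding time in state \<open>x\<close> is \<open>E / q x\<close>, so \<open>dep_bound x * E\<close> equals
  \<open>length tr * mu pm\<close> times the integral of the departure rate \<open>\<nu>\<^sub>p\<^sub>m\<close> over that holding time.\<close>

lemma compensator_le_integral:
  assumes M: "jump_time y \<omega> M \<le> T" "T < jump_time y \<omega> (Suc M)"
  shows "compensator y M \<omega> \<le> real (length tr) * mu pm * integral {0..T} (\<lambda>s. nu_pm (Qp N C lam mu y \<omega> s))"
proof -
  have "compensator y M \<omega>
      = real (length tr) * mu pm * (\<Sum>j<M. nu_pm (chain y \<omega> j) * (jump_time y \<omega> (Suc j) - jump_time y \<omega> j))"
    unfolding compensator_eq_sum sum_distrib_left
    by (intro sum.cong refl) (simp add: dep_bound_def rate_departure field_simps del: jtime.simps(1))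
  also have "\<dots> \<le> real (length tr) * mu pm * integral {0..T} (\<lambda>s. nu_pm (Qp N C lam mu y \<omega> s))"
    using integral_nu_pm_ge[OF M] mu_pos[rule_format, of pm] by (intro mult_left_mono) simp_all
  finally show ?thesis .
qed

end

text \<open>If the jump times accumulate before \<open>T\<close>, then \<open>njumps\<close> is the cardinality of an
  infinite set, i.e. \<open>0\<close>, and no arrivals are counted.\<close>

lemma Arr_eq_0_if_jump_times_bounded:
  assumes "\<And>k. jump_time y \<omega> k \<le> T"
  shows "Arr N C lam mu y \<omega> T r = 0"
proof -
  have "{j. 1 \<le> j \<and> jump_time y \<omega> j \<le> T} = {1..}" using assms by auto
  then have "njumps N C lam mu y \<omega> T = 0" unfolding njumps_def using infinite_Ici[of "1::nat"] by simp
  then show ?thesis unfolding Arr_def by simp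
qed


section \<open>The probability of the event\<close>

lemma Event_pm_bounds:
  assumes ev: "\<omega> \<in> Event N C lam mu nrm n \<tau> \<delta> y (a, \<nu>)" and nu0: "\<nu> pm = 0"
    and T: "T = real n * \<tau>" "T > 0"
  shows "real (Arr N C lam mu y \<omega> T pm) > (a pm - \<delta>) * T"
    and "integral {0..T} (\<lambda>s. nu_pm (Qp N C lam mu y \<omega> s)) < \<delta> * T"
    and "nrm (\<lambda>r. real (Qp N C lam mu y \<omega> T r)) < \<delta> * real n"
proof -
  have dist: "dG R (empgen N C lam mu y \<omega> T) (a, \<nu>) < \<delta>"
    and sup: "(SUP t\<in>{0..T}. ereal (nrm (\<lambda>r. real (Qp N C lam mu y \<omega> t r)))) < ereal (\<delta> * real n)"
    using ev[unfolded Event_def, THEN CollectD, THEN conjunct2] unfolding T(1)[symmetric] by auto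
  have "\<bar>real (Arr N C lam mu y \<omega> T pm) / T - a pm\<bar> < \<delta>"
    using dG_coordinate_le(1)[OF pm_route finite_routes, of "empgen N C lam mu y \<omega> T" "(a, \<nu>)"] dist
    by (simp add: empgen_def)
  then show "real (Arr N C lam mu y \<omega> T pm) > (a pm - \<delta>) * T"
    using T(2) by (simp add: abs_less_iff field_simps)
  have "\<bar>integral {0..T} (\<lambda>s. nu_pm (Qp N C lam mu y \<omega> s)) / T - \<nu> pm\<bar> < \<delta>"
    using dG_coordinate_le(2)[OF pm_route finite_routes, of "empgen N C lam mu y \<omega> T" "(a, \<nu>)"] dist
    by (simp add: empgen_def)
  then show "integral {0..T} (\<lambda>s. nu_pm (Qp N C lam mu y \<omega> s)) < \<delta> * T"
    using T(2) nu0 by (simp add: abs_less_iff field_simps)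
  have "ereal (nrm (\<lambda>r. real (Qp N C lam mu y \<omega> T r)))
      \<le> (SUP t\<in>{0..T}. ereal (nrm (\<lambda>r. real (Qp N C lam mu y \<omega> t r))))"
    using T(2) by (intro SUP_upper) auto
  then have "ereal (nrm (\<lambda>r. real (Qp N C lam mu y \<omega> T r))) < ereal (\<delta> * real n)"
    using sup by (rule order.strict_trans1)
  then show "nrm (\<lambda>r. real (Qp N C lam mu y \<omega> T r)) < \<delta> * real n" by simp
qed

lemma Event_imp_target_reached:
  fixes nrm :: "(route \<Rightarrow> real) \<Rightarrow> real" and a \<nu> :: "route \<Rightarrow> real"
    and n :: nat and \<tau> \<delta> \<theta> c :: real
  assumes T_def: "T = real n * \<tau>"
    and K_def: "K = (a pm - \<delta>) * T - c * \<delta> * real n"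
    and L_def: "L = exp (\<theta> * K - (exp \<theta> - 1) * real (length tr) * mu pm * \<delta> * T)"
    and c: "c > 0" "\<forall>x. supported R x \<longrightarrow> \<bar>x pm\<bar> \<le> c * nrm x"
    and nu0: "\<nu> pm = 0" and y: "supported R y"
    and n: "n > 0" and \<tau>: "\<tau> > 0" and \<theta>: "\<theta> \<ge> 0" and \<delta>: "\<delta> > 0" and K: "K > 0"
    and ev: "\<omega> \<in> Event N C lam mu nrm n \<tau> \<delta> y (a, \<nu>)"
    and holding_pos: "\<forall>k. fst (\<omega> k) > 0"
  shows "\<exists>m. K \<le> departures y m \<omega> \<and> L \<le> supermart \<theta> y K m \<omega>"
proof -
  have T: "T > 0" using n \<tau> unfolding T_def by simp
  note bounds = Event_pm_bounds[OF ev nu0 T_def T]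
  have "\<exists>k. T < jump_time y \<omega> k"
  proof (rule ccontr)
    assume "\<not> (\<exists>k. T < jump_time y \<omega> k)"
    then have "Arr N C lam mu y \<omega> T pm = 0"
      by (intro Arr_eq_0_if_jump_times_bounded) (simp add: not_less)
    moreover have "(a pm - \<delta>) * T \<ge> K" unfolding K_def using c(1) \<delta> by simp
    ultimately show False using bounds(1) K by linarith
  qed
  then obtain M where M: "jump_time y \<omega> M \<le> T" "T < jump_time y \<omega> (Suc M)"
    using exists_jump_time_bracket[OF holding_pos, of T] T by auto
  have "supported R (Qp N C lam mu y \<omega> T)" unfolding Qp_def by (rule supported_chain[OF y])
  then have "supported R (\<lambda>r. real (Qp N C lam mu y \<omega> T r))" by (simp add: supported_def)
  then have "\<bar>real (Qp N C lam mu y \<omega> T pm)\<bar> \<le> c * nrm (\<lambda>r. real (Qp N C lam mu y \<omega> T r))"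
    using c(2) by blast
  also have "\<dots> < c * (\<delta> * real n)" using bounds(3) c(1) by simp
  finally have "real (Qp N C lam mu y \<omega> T pm) < c * \<delta> * real n" by simp
  then have K_le: "K \<le> departures y M \<omega>"
    using departures_ge_arrivals_minus_queue[OF holding_pos M] bounds(1) unfolding K_def by linarith
  have "compensator y M \<omega> \<le> real (length tr) * mu pm * integral {0..T} (\<lambda>s. nu_pm (Qp N C lam mu y \<omega> s))"
    by (rule compensator_le_integral[OF holding_pos M])
  also have "\<dots> \<le> real (length tr) * mu pm * (\<delta> * T)"
    using bounds(2) mu_pos[rule_format, of pm] by (intro mult_left_mono) simp_all
  finally have "L \<le> exp (\<theta> * K - (exp \<theta> - 1) * compensator y M \<omega>)"
    unfolding L_def using \<theta> by (simp add: mult_left_mono mult.assoc)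
  also have "\<dots> \<le> supermart \<theta> y K M \<omega>"
    using supermart_ge[OF \<theta> _ K_le] holding_pos by (simp add: less_imp_le)
  finally show ?thesis using K_le by blast
qed

lemma Event_subset_target_reached:
  fixes nrm :: "(route \<Rightarrow> real) \<Rightarrow> real" and a \<nu> :: "route \<Rightarrow> real"
    and n :: nat and \<tau> \<delta> \<theta> c :: real
  assumes T_def: "T = real n * \<tau>"
    and K_def: "K = (a pm - \<delta>) * T - c * \<delta> * real n"
    and L_def: "L = exp (\<theta> * K - (exp \<theta> - 1) * real (length tr) * mu pm * \<delta> * T)"
    and c: "c > 0" "\<forall>x. supported R x \<longrightarrow> \<bar>x pm\<bar> \<le> c * nrm x"
    and nu0: "\<nu> pm = 0" and y: "supported R y"
    and n: "n > 0" and \<tau>: "\<tau> > 0" and \<theta>: "\<theta> \<ge> 0" and \<delta>: "\<delta> > 0" and K: "K > 0"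
  shows "Event N C lam mu nrm n \<tau> \<delta> y (a, \<nu>) \<subseteq>
           (\<Union>m. {\<omega> \<in> space Omega. K \<le> departures y m \<omega> \<and> L \<le> supermart \<theta> y K m \<omega>}) \<union>
           {\<omega> \<in> space Omega. \<exists>k. fst (\<omega> k) \<le> 0}"
proof
  fix \<omega> assume ev: "\<omega> \<in> Event N C lam mu nrm n \<tau> \<delta> y (a, \<nu>)"
  then have \<omega>: "\<omega> \<in> space Omega" unfolding Event_def by blast
  show "\<omega> \<in> (\<Union>m. {\<omega> \<in> space Omega. K \<le> departures y m \<omega> \<and> L \<le> supermart \<theta> y K m \<omega>}) \<union>
           {\<omega> \<in> space Omega. \<exists>k. fst (\<omega> k) \<le> 0}"
  proof (cases "\<exists>k. fst (\<omega> k) \<le> 0")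
    case False
    then have "\<forall>k. fst (\<omega> k) > 0" by (simp add: not_le)
    then obtain m where "K \<le> departures y m \<omega> \<and> L \<le> supermart \<theta> y K m \<omega>"
      using Event_imp_target_reached[OF T_def K_def L_def c nu0 y n \<tau> \<theta> \<delta> K ev] by blast
    then show ?thesis using \<omega> by (intro UnI1 UN_I[of m]) simp_all
  qed (use \<omega> in blast)
qed

lemma measure_Event_le:
  fixes nrm :: "(route \<Rightarrow> real) \<Rightarrow> real" and a \<nu> :: "route \<Rightarrow> real"
    and n :: nat and \<tau> \<delta> \<theta> c :: real
  assumes T_def: "T = real n * \<tau>"
    and K_def: "K = (a pm - \<delta>) * T - c * \<delta> * real n"
    and L_def: "L = exp (\<theta> * K - (exp \<theta> - 1) * real (length tr) * mu pm * \<delta> * T)"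
    and c: "c > 0" "\<forall>x. supported R x \<longrightarrow> \<bar>x pm\<bar> \<le> c * nrm x"
    and nu0: "\<nu> pm = 0" and y: "supported R y"
    and n: "n > 0" and \<tau>: "\<tau> > 0" and \<theta>: "\<theta> \<ge> 0" and \<delta>: "\<delta> > 0"
  shows "measure Omega (Event N C lam mu nrm n \<tau> \<delta> y (a, \<nu>)) \<le> 1 / L"
proof -
  interpret P: prob_space Omega by (rule prob_space_Omega)
  let ?E = "Event N C lam mu nrm n \<tau> \<delta> y (a, \<nu>)"
  have L: "L > 0" unfolding L_def by simp
  show ?thesis
  proof (cases "K > 0")
    case False
    have "(exp \<theta> - 1) * real (length tr) * mu pm * \<delta> * T \<ge> 0"
      using \<theta> mu_pos[rule_format, of pm] \<delta> n \<tau> unfolding T_def by simp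
    moreover have "\<theta> * K \<le> 0" using False \<theta> by (simp add: mult_nonneg_nonpos)
    ultimately have "L \<le> 1" unfolding L_def by simp
    then have "1 \<le> 1 / L" using L by simp
    then show ?thesis using P.prob_le_1[of ?E] by linarith
  next
    case True
    let ?A = "\<Union>m. {\<omega> \<in> space Omega. K \<le> departures y m \<omega> \<and> L \<le> supermart \<theta> y K m \<omega>}"
    let ?B = "{\<omega> \<in> space Omega. \<exists>k. fst (\<omega> k) \<le> 0}"
    have A: "?A \<in> sets Omega" by measurable
    have B: "?B \<in> null_sets Omega" by (rule null_sets_nonpos_holding)
    then have B_sets: "?B \<in> sets Omega" by (rule null_setsD2)
    have "measure Omega ?E \<le> measure Omega (?A \<union> ?B)"
      using Event_subset_target_reached[where nrm=nrm and a=a and \<nu>=\<nu>, OF T_def K_def L_def c nu0 y n \<tau> \<theta> \<delta> True]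
      by (rule P.finite_measure_mono[OF _ sets.Un[OF A B_sets]])
    also have "\<dots> \<le> measure Omega ?A + measure Omega ?B"
      by (rule measure_Un_le[OF A B_sets])
    also have "measure Omega ?B = 0" using B by (simp add: measure_def null_sets_def)
    also have "measure Omega ?A \<le> 1 / L"
    proof -
      have "ennreal (measure Omega ?A) \<le> ennreal (1 / L)"
        using emeasure_target_reached_le[OF \<theta> L] P.emeasure_eq_measure by simp
      then show ?thesis using L by (simp add: ennreal_le_iff)
    qed
    finally show ?thesis by simp
  qed
qed

end

section \<open>Limits\<close>

lemma mono_tendsto_at_right_0_Inf:
  fixes F :: "real \<Rightarrow> 'a::{complete_linorder, linorder_topology}"
  assumes mono: "\<And>s t. 0 < s \<Longrightarrow> s \<le> t \<Longrightarrow> F s \<le> F t"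
  shows "(F \<longlongrightarrow> Inf (F ` {0<..})) (at_right 0)"
proof (rule order_tendstoI)
  fix c assume "c < Inf (F ` {0<..})"
  then have "c < F t" if "0 < t" for t
    using Inf_lower[of "F t" "F ` {0<..}"] that by (simp add: order.strict_trans2)
  then show "\<forall>\<^sub>F t in at_right 0. c < F t"
    unfolding eventually_at_right_field by (intro exI[of _ 1]) auto
next
  fix c assume "Inf (F ` {0<..}) < c"
  then obtain t0 where t0: "t0 > 0" "F t0 < c" by (auto simp: Inf_less_iff)
  then have "F t < c" if "0 < t" "t < t0" for t
    using mono[of t t0] that by (simp add: order.strict_trans1)
  then show "\<forall>\<^sub>F t in at_right 0. F t < c"
    unfolding eventually_at_right_field using t0 by (intro exI[of _ t0]) auto
qed

lemma tendsto_MInfty_at_right_0_if_linear_bounds: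
  fixes h :: "real \<Rightarrow> ereal"
  assumes c: "c > 0" and bound: "\<And>\<theta>. \<theta> \<ge> 0 \<Longrightarrow> \<exists>Z. \<forall>\<delta>>0. h \<delta> \<le> ereal (\<delta> * Z - \<theta> * c)"
  shows "(h \<longlongrightarrow> -\<infinity>) (at_right 0)"
  unfolding tendsto_MInfty
proof
  fix r :: real
  obtain Z where Z: "\<And>\<delta>. \<delta> > 0 \<Longrightarrow> h \<delta> \<le> ereal (\<delta> * Z - (\<bar>r\<bar> + 1) / c * c)"
    using bound[of "(\<bar>r\<bar> + 1) / c"] c by auto
  have "h \<delta> < ereal r" if "0 < \<delta>" "\<delta> < 1 / (\<bar>Z\<bar> + 1)" for \<delta>
  proof -
    have "\<delta> * Z \<le> \<delta> * \<bar>Z\<bar>" using that(1) by (simp add: mult_left_mono)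
    also have "\<dots> < 1" using that by (simp add: field_simps)
    finally have "\<delta> * Z - (\<bar>r\<bar> + 1) / c * c < r" using c by simp
    then show ?thesis using Z[OF that(1)] by (simp add: order.strict_trans1)
  qed
  then show "\<forall>\<^sub>F \<delta> in at_right 0. h \<delta> < ereal r"
    unfolding eventually_at_right_field by (intro exI[of _ "1 / (\<bar>Z\<bar> + 1)"]) auto
qed

lemma elog_le_minus_ln:
  assumes "p \<le> 1 / L" "L > 0"
  shows "elog p \<le> ereal (- ln L)"
proof (cases "p \<le> 0")
  case False
  then have "ln p \<le> ln (1 / L)" using assms by (intro ln_mono) auto
  then show ?thesis using False assms(2) by (simp add: elog_def ln_div)
qed (simp add: elog_def)

lemma limsup_rate_fun_mono:
  assumes "\<tau> > 0" "\<epsilon>1 \<le> \<epsilon>2"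
  shows "limsup (rate_fun N C lam mu nrm G \<tau> \<delta> \<epsilon>1) \<le> limsup (rate_fun N C lam mu nrm G \<tau> \<delta> \<epsilon>2)"
proof (intro Limsup_mono always_eventually allI)
  fix n
  have "{y. supported (routes N lam) y \<and> nrm (\<lambda>r. real (y r)) < \<epsilon>1 * real n}
      \<subseteq> {y. supported (routes N lam) y \<and> nrm (\<lambda>r. real (y r)) < \<epsilon>2 * real n}"
    using mult_right_mono[OF assms(2), of "real n"] by auto
  then show "rate_fun N C lam mu nrm G \<tau> \<delta> \<epsilon>1 n \<le> rate_fun N C lam mu nrm G \<tau> \<delta> \<epsilon>2 n"
    unfolding rate_fun_def using assms(1) by (intro ereal_mult_left_mono SUP_subset_mono) auto
qed

context star_network
begin

lemma rate_fun_le: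
  fixes nrm :: "(route \<Rightarrow> real) \<Rightarrow> real" and a \<nu> :: "route \<Rightarrow> real"
  assumes c: "c > 0" "\<forall>x. supported R x \<longrightarrow> \<bar>x pm\<bar> \<le> c * nrm x" and nu0: "\<nu> pm = 0"
    and \<tau>: "\<tau> > 0" and \<delta>: "\<delta> > 0" and \<theta>: "\<theta> \<ge> 0" and n: "n > 0"
  shows "rate_fun N C lam mu nrm (a, \<nu>) \<tau> \<delta> \<epsilon> n
           \<le> ereal (\<delta> * (\<theta> * (1 + c / \<tau>) + (exp \<theta> - 1) * real (length tr) * mu pm) - \<theta> * a pm)"
    (is "_ \<le> ereal ?B")
proof -
  define T where "T = real n * \<tau>"
  define K where "K = (a pm - \<delta>) * T - c * \<delta> * real n"
  define L where "L = exp (\<theta> * K - (exp \<theta> - 1) * real (length tr) * mu pm * \<delta> * T)"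
  have T: "T > 0" using n \<tau> unfolding T_def by simp
  have "- ln L = T * ?B"
    unfolding L_def K_def T_def using \<tau> by (simp add: field_simps)
  moreover have "elog (measure Omega (Event N C lam mu nrm n \<tau> \<delta> y (a, \<nu>))) \<le> ereal (- ln L)"
    if "supported R y" for y
    using measure_Event_le[where nrm=nrm and a=a and \<nu>=\<nu>, OF T_def K_def L_def c nu0 that n \<tau> \<theta> \<delta>] by (rule elog_le_minus_ln) (simp add: L_def)
  ultimately have "(SUP y\<in>{y. supported R y \<and> nrm (\<lambda>r. real (y r)) < \<epsilon> * real n}.
      elog (measure Omega (Event N C lam mu nrm n \<tau> \<delta> y (a, \<nu>)))) \<le> ereal (T * ?B)"
    by (intro SUP_least) auto
  then have "rate_fun N C lam mu nrm (a, \<nu>) \<tau> \<delta> \<epsilon> n \<le> ereal (1 / T) * ereal (T * ?B)"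
    unfolding rate_fun_def T_def[symmetric] using T by (intro ereal_mult_left_mono) auto
  also have "\<dots> = ereal ?B" using T by simp
  finally show ?thesis .
qed

lemma limsup_rate_fun_le:
  fixes nrm :: "(route \<Rightarrow> real) \<Rightarrow> real" and a \<nu> :: "route \<Rightarrow> real"
  assumes "c > 0" "\<forall>x. supported R x \<longrightarrow> \<bar>x pm\<bar> \<le> c * nrm x" "\<nu> pm = 0"
    and "\<tau> > 0" "\<delta> > 0" "\<theta> \<ge> 0"
  shows "limsup (rate_fun N C lam mu nrm (a, \<nu>) \<tau> \<delta> \<epsilon>)
           \<le> ereal (\<delta> * (\<theta> * (1 + c / \<tau>) + (exp \<theta> - 1) * real (length tr) * mu pm) - \<theta> * a pm)"
  using rate_fun_le[where nrm=nrm and a=a and \<nu>=\<nu>, OF assms]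
  by (intro Limsup_bounded) (auto simp: eventually_sequentially intro!: exI[of _ 1])

end

theorem lemma6p3:
  fixes N :: nat and C :: "nat \<Rightarrow> real" and lam mu :: "route \<Rightarrow> real"
    and nrm :: "(route \<Rightarrow> real) \<Rightarrow> real"
    and a \<nu> :: "route \<Rightarrow> real" and pm :: route
  assumes C_pos: "\<forall>i\<in>{1..N}. C i > 0"
    and lam_nonneg: "\<forall>r. lam r \<ge> 0"
    and mu_pos: "\<forall>r. mu r > 0"
    and norm: "is_norm_on (routes N lam) nrm"
    and G_in: "(a, \<nu>) \<in> Gamma_set N C lam"
    and pm: "pm \<in> routes N lam" "\<nu> pm = 0" "a pm > 0"
  shows "\<exists>h g.
     (\<forall>\<tau>>0. \<forall>\<delta>>0. ((\<lambda>\<epsilon>. limsup (rate_fun N C lam mu nrm (a, \<nu>) \<tau> \<delta> \<epsilon>)) \<longlongrightarrow> h \<tau> \<delta>) (at_right 0)) \<and>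
     (\<forall>\<tau>>0. ((\<lambda>\<delta>. h \<tau> \<delta>) \<longlongrightarrow> g \<tau>) (at_right 0)) \<and>
     (g \<longlongrightarrow> -\<infinity>) (at_right (0::real))"
proof -
  interpret star_network N C lam mu pm
    using C_pos lam_nonneg mu_pos pm(1) by unfold_locales
  obtain c where c: "c > 0" "\<forall>x. supported (routes N lam) x \<longrightarrow> \<bar>x pm\<bar> \<le> c * nrm x"
    using coordinate_le_norm[OF norm finite_routes pm(1)] by blast
  define F where "F \<tau> \<delta> \<epsilon> = limsup (rate_fun N C lam mu nrm (a, \<nu>) \<tau> \<delta> \<epsilon>)" for \<tau> \<delta> \<epsilon>
  define h where "h \<tau> \<delta> = Inf (F \<tau> \<delta> ` {0<..})" for \<tau> \<delta>
  have "(F \<tau> \<delta> \<longlongrightarrow> h \<tau> \<delta>) (at_right 0)" if "\<tau> > 0" for \<tau> \<delta>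
    unfolding h_def F_def using limsup_rate_fun_mono[OF that] by (intro mono_tendsto_at_right_0_Inf)
  moreover have "(h \<tau> \<longlongrightarrow> -\<infinity>) (at_right 0)" if \<tau>: "\<tau> > 0" for \<tau>
  proof (rule tendsto_MInfty_at_right_0_if_linear_bounds[OF pm(3)])
    fix \<theta> :: real assume \<theta>: "\<theta> \<ge> 0"
    have "h \<tau> \<delta> \<le> F \<tau> \<delta> 1" for \<delta> unfolding h_def by (intro Inf_lower) auto
    then show "\<exists>Z. \<forall>\<delta>>0. h \<tau> \<delta> \<le> ereal (\<delta> * Z - \<theta> * a pm)"
      using limsup_rate_fun_le[where nrm=nrm and a=a and \<nu>=\<nu>, OF c pm(2) \<tau> _ \<theta>] unfolding F_def by (blast intro: order.trans)
  qed
  ultimately show ?thesis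
    unfolding F_def by (intro exI[of _ h] exI[of _ "\<lambda>_. -\<infinity>"]) auto
qed

end
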